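(* Let $S,Q$ be disjoint finite sets and let $\mathcal{M}_{SQ}$ be a matroid on $S\uplus Q$ which is $\{S,Q\}$-complete. Let $S',Q'$ be disjoint copies of $S,Q$ (disjoint from $S\uplus Q$). Then $$\mathcal{M}_{SQ}=(\mathcal{M}_{SQ})_{SQ'}\leftrightarrow\big((\mathcal{M}_{SQ})_{S'Q}\leftrightarrow(\mathcal{M}^*_{SQ})_{S'Q'}\big),$$ and there exist a finite set $\hat P$ disjoint from $S\uplus Q$ and matroids $\mathcal{M}_{S\hat P}$ on $S\uplus\hat P$ and $\mathcal{M}_{\hat PQ}$ on $\hat P\uplus Q$ such that $\mathcal{M}_{SQ}=\mathcal{M}_{S\hat P}\leftrightarrow\mathcal{M}_{\hat PQ}$ and: (i) $|\hat P|=r(\mathcal{M}_{SQ}\circ S)-r(\mathcal{M}_{SQ}\times S)$, and $\hat P$ is contained in some base and in some cobase of $\mathcal{M}_{S\hat P}$, and in some base and in some cobase of $\mathcal{M}_{\hat PQ}$; (ii) $\mathcal{M}_{S\hat P}$ is $\{S,\hat P\}$-complete, $\mathcal{M}_{\hat PQ}$ is $\{\hat P,Q\}$-complete, $\mathcal{E}_S(\mathcal{M}_{SQ})=\mathcal{E}_S(\mathcal{M}_{S\hat P})$, $\mathcal{E}_Q(\mathcal{M}_{SQ})=\mathcal{E}_Q(\mathcal{M}_{\hat PQ})$ and $\mathcal{E}_{\hat P}(\mathcal{M}^*_{S\hat P})=\mathcal{E}_{\hat P}(\mathcal{M}_{\hat PQ})$.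
   Context: Matroids are on finite sets and given by their bases; $\mathcal{M}^*$ is the dual (bases = complements of bases), $r(\mathcal{M})$ the rank. For $T\subseteq E$ and a matroid $\mathcal{M}$ on $E$: the restriction $\mathcal{M}\circ T$ has as independent sets the independent sets of $\mathcal{M}$ contained in $T$; the contraction $\mathcal{M}\times T$ is the matroid on $T$ whose bases are the minimal sets $b\cap T$, $b$ a base of $\mathcal{M}$. $\mathbf{0}_X$ is the matroid on $X$ whose only base is $\emptyset$; $\oplus$ is direct sum. For matroids $\mathcal{M}_1,\mathcal{M}_2$ on the same set, $\mathcal{M}_1\vee\mathcal{M}_2$ has as bases the maximal sets $b_1\cup b_2$ ($b_i$ a base of $\mathcal{M}_i$). For a matroid $\mathcal{M}_A$ on $A$ and $\mathcal{M}_B$ on $B$, $\mathcal{M}_A\vee\mathcal{M}_B:=(\mathcal{M}_A\oplus\mathbf{0}_{B-A})\vee(\mathcal{M}_B\oplus\mathbf{0}_{A-B})$ and the linking is $\mathcal{M}_A\leftrightarrow\mathcal{M}_B:=(\mathcal{M}_A\vee\mathcal{M}_B)\times((A-B)\cup(B-A))$. Subscripts indicate ground sets. If $X'$ is a disjoint copy of $X$ (via a fixed bijection $e\mapsto e'$), $(\mathcal{M}_{XY})_{X'Y}$ denotes the copy of $\mathcal{M}_{XY}$ on $X'\uplus Y$ obtained by renaming, and similarly for other copies. A matroid $\mathcal{M}_{SQ}$ on $S\uplus Q$ is $\{S,Q\}$-complete if whenever $b_S,b_S'\subseteq S$, $b_Q,b_Q'\subseteq Q$ and $b_S\uplus b_Q$,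 $b_S\uplus b'_Q$, $b'_S\uplus b_Q$ are bases, then $b'_S\uplus b'_Q$ is a base. For an $\{S,Q\}$-complete $\mathcal{M}_{SQ}$: call $X\subseteq S$ an $S$-part if $X\uplus Y$ is a base for some $Y\subseteq Q$; for $S$-parts $X,X'$ put $X\sim X'$ iff there is $Y\subseteq Q$ with $X\uplus Y$ and $X'\uplus Y$ both bases (this is an equivalence relation for complete matroids). $\mathcal{E}_S(\mathcal{M}_{SQ})$ is the set of its equivalence classes (blocks); $\mathcal{E}_Q(\mathcal{M}_{SQ})$ is defined symmetrically. (Its blocks include the family of bases of $\mathcal{M}_{SQ}\circ S$ and the family of bases of $\mathcal{M}_{SQ}\times S$.) *)

theory Defs
  imports Main
begin

text \<open>A matroid on a finite ground set E is represented by its family of bases B.\<close>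

definition matroid :: "'a set \<Rightarrow> 'a set set \<Rightarrow> bool" where
  "matroid E B \<longleftrightarrow> finite E \<and> B \<noteq> {} \<and> (\<forall>b\<in>B. b \<subseteq> E) \<and>
     (\<forall>b1\<in>B. \<forall>b2\<in>B. \<forall>x\<in>b1 - b2. \<exists>y\<in>b2 - b1. insert y (b1 - {x}) \<in> B)"

definition maxsets :: "'a set set \<Rightarrow> 'a set set" where
  "maxsets F = {X\<in>F. \<forall>Y\<in>F. X \<subseteq> Y \<longrightarrow> Y = X}"

definition minsets :: "'a set set \<Rightarrow> 'a set set" where
  "minsets F = {X\<in>F. \<forall>Y\<in>F. Y \<subseteq> X \<longrightarrow> Y = X}"

definition dualb :: "'a set \<Rightarrow> 'a set set \<Rightarrow> 'a set set" where
  "dualb E B = (\<lambda>b. E - b) ` B"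

definition restrb :: "'a set set \<Rightarrow> 'a set \<Rightarrow> 'a set set" where
  "restrb B T = maxsets {I. I \<subseteq> T \<and> (\<exists>b\<in>B. I \<subseteq> b)}"

definition contrb :: "'a set set \<Rightarrow> 'a set \<Rightarrow> 'a set set" where
  "contrb B T = minsets ((\<lambda>b. b \<inter> T) ` B)"

text \<open>Matroid union on a common ground set: maximal sets b1 \<union> b2.
  Direct sums with 0_X do not change the base family, so M_A \<or> M_B
  has the same bases on A \<union> B.\<close>
definition unionb :: "'a set set \<Rightarrow> 'a set set \<Rightarrow> 'a set set" where
  "unionb B1 B2 = maxsets {b1 \<union> b2 | b1 b2. b1 \<in> B1 \<and> b2 \<in> B2}"

definition linkb :: "'a set \<Rightarrow> 'a set set \<Rightarrow> 'a set \<Rightarrow> 'a set set \<Rightarrow> 'a set set" where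
  "linkb A BA B BB = contrb (unionb BA BB) ((A - B) \<union> (B - A))"

definition rankb :: "'a set set \<Rightarrow> nat" where
  "rankb B = card (SOME b. b \<in> B)"

definition renameb :: "('a \<Rightarrow> 'a) \<Rightarrow> 'a set set \<Rightarrow> 'a set set" where
  "renameb g B = (\<lambda>b. g ` b) ` B"

definition complete :: "'a set \<Rightarrow> 'a set \<Rightarrow> 'a set set \<Rightarrow> bool" where
  "complete S Q B \<longleftrightarrow> (\<forall>bS bS' bQ bQ'. bS \<subseteq> S \<and> bS' \<subseteq> S \<and> bQ \<subseteq> Q \<and> bQ' \<subseteq> Q \<and>
      bS \<union> bQ \<in> B \<and> bS \<union> bQ' \<in> B \<and> bS' \<union> bQ \<in> B \<longrightarrow> bS' \<union> bQ' \<in> B)"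

definition parts :: "'a set \<Rightarrow> 'a set \<Rightarrow> 'a set set \<Rightarrow> 'a set set" where
  "parts S Q B = {X. X \<subseteq> S \<and> (\<exists>Y. Y \<subseteq> Q \<and> X \<union> Y \<in> B)}"

definition partrel :: "'a set \<Rightarrow> 'a set \<Rightarrow> 'a set set \<Rightarrow> ('a set \<times> 'a set) set" where
  "partrel S Q B = {(X, X'). X \<in> parts S Q B \<and> X' \<in> parts S Q B \<and>
      (\<exists>Y. Y \<subseteq> Q \<and> X \<union> Y \<in> B \<and> X' \<union> Y \<in> B)}"

definition blocks :: "'a set \<Rightarrow> 'a set \<Rightarrow> 'a set set \<Rightarrow> 'a set set set" where
  "blocks S Q B = parts S Q B // partrel S Q B"

end

theory Submission
  imports Defs
begin

(*
  Everything rests on one computation (linkb_eq_split_middle): if A is a matroid on S + P and B an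
  equicardinal family on P + Q in which every b has a partner a in A with a Int P = P - b, then the
  bases of A <-> B are the sets (a Int S) Un (b Int Q) with a and b disjoint and covering P.

  For complete M, call Y, Y' in Q equivalent if X Un Y and X Un Y' are bases for a common X in S;
  completeness makes this transitive.  The bases of (M)_{S'Q} <-> (M^* )_{S'Q'} are the sets
  Y' Un (Q - Y)' with Y, Y' equivalent, and they satisfy the exchange axiom.  Now take Y0 in Y1 in Q
  such that every S-part of M completes to a base whose Q-part lies between Y0 and Y1.  Let P be a copy
  of Y1 - Y0, M_SP the minor M / Y0 on S Un Y1 renamed onto S Un P, and M_PQ the matching minor of
  the linking above.  A base X Un D' of M_SP and a base (Y1 - Y)' Un Y' of M_PQ are complementary on P
  exactly when Y = Y0 Un D, and then X Un Y' is a base of M by completeness; hence M = M_SP <-> M_PQ,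
  and the same descriptions of the bases give completeness of both factors and the equalities of
  blocks.  The window {} in Q yields the first identity of the theorem; Q-parts Y0, Y1 of minimum and
  maximum size, which can be chosen nested, give |P| = r(M o S) - r(M x S) and put P into a base and
  a cobase of each factor.
*)

section \<open>Bases of a matroid\<close>

lemma matroid_finite_ground: "matroid E B \<Longrightarrow> finite E"
  by (simp add: matroid_def)

lemma matroid_base_subset: "matroid E B \<Longrightarrow> b \<in> B \<Longrightarrow> b \<subseteq> E"
  by (auto simp: matroid_def)

lemma matroid_bases_nonempty: "matroid E B \<Longrightarrow> B \<noteq> {}"
  by (simp add: matroid_def)

lemma matroid_base_finite: "matroid E B \<Longrightarrow> b \<in> B \<Longrightarrow> finite b"
  by (meson finite_subset matroid_finite_ground matroid_base_subset)

lemma matroid_exchange: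
  "matroid E B \<Longrightarrow> b1 \<in> B \<Longrightarrow> b2 \<in> B \<Longrightarrow> x \<in> b1 - b2 \<Longrightarrow> \<exists>y\<in>b2 - b1. insert y (b1 - {x}) \<in> B"
  unfolding matroid_def by blast

lemma matroid_bases_card_eq:
  assumes M: "matroid E B" and "b1 \<in> B" and b2: "b2 \<in> B"
  shows "card b1 = card b2"
  using \<open>b1 \<in> B\<close>
proof (induction "card (b1 - b2)" arbitrary: b1 rule: less_induct)
  case less
  have fin: "finite b1" "finite b2" using M less.prems b2 by (auto intro: matroid_base_finite)
  show ?case
  proof (cases "b1 - b2 = {}")
    case True
    have "b2 - b1 = {}"
    proof (rule ccontr)
      assume "b2 - b1 \<noteq> {}"
      then obtain y where "y \<in> b2 - b1" by blast
      with matroid_exchange[OF M b2 less.prems] True show False by blast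
    qed
    with True have "b1 = b2" by blast
    then show ?thesis by simp
  next
    case False
    then obtain x where x: "x \<in> b1 - b2" by blast
    from matroid_exchange[OF M less.prems b2 x] obtain y
      where y: "y \<in> b2 - b1" and b1': "insert y (b1 - {x}) \<in> B" by blast
    have "insert y (b1 - {x}) - b2 = (b1 - b2) - {x}" using x y by blast
    also have "card \<dots> < card (b1 - b2)" using x fin by (intro card_Diff1_less) auto
    finally have "card (insert y (b1 - {x}) - b2) < card (b1 - b2)" .
    from less.hyps[OF this b1'] have "card (insert y (b1 - {x})) = card b2" .
    moreover have "card (insert y (b1 - {x})) = card b1"
    proof -
      have "card b1 > 0" using x fin card_gt_0_iff by blast
      then show ?thesis using x y fin by simp
    qed
    ultimately show ?thesis by simp
  qed
qed

lemma matroid_dual_exchange: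
  assumes M: "matroid E B" and b1: "b1 \<in> B" and "b2 \<in> B" and "y \<in> b2 - b1"
  shows "\<exists>x\<in>b1 - b2. insert y (b1 - {x}) \<in> B"
  using \<open>b2 \<in> B\<close> \<open>y \<in> b2 - b1\<close>
proof (induction "card (b2 - b1)" arbitrary: b2 rule: less_induct)
  case less
  have fin: "finite b1" "finite b2" using M less.prems b1 by (auto intro: matroid_base_finite)
  show ?case
  proof (cases "b2 - b1 = {y}")
    case True
    have "card b1 = card (b1 \<inter> b2) + card (b1 - b2)" "card b2 = card (b1 \<inter> b2) + card (b2 - b1)"
      using fin card_Int_Diff[of b2 b1] by (simp_all add: card_Int_Diff Int_commute)
    then have "card (b1 - b2) = 1"
      using True matroid_bases_card_eq[OF M b1 less.prems(1)] by simp
    then obtain x where x: "b1 - b2 = {x}" by (auto simp: card_Suc_eq)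
    then have "insert y (b1 - {x}) = b2" using True by blast
    then show ?thesis using x less.prems by auto
  next
    case False
    then obtain y' where y': "y' \<in> b2 - b1" "y' \<noteq> y" using less.prems by blast
    from matroid_exchange[OF M less.prems(1) b1 y'(1)] obtain x'
      where x': "x' \<in> b1 - b2" and b2': "insert x' (b2 - {y'}) \<in> B" by blast
    have "insert x' (b2 - {y'}) - b1 = (b2 - b1) - {y'}" using x' y' by blast
    also have "card \<dots> < card (b2 - b1)" using y' fin by (intro card_Diff1_less) auto
    finally have "card (insert x' (b2 - {y'}) - b1) < card (b2 - b1)" .
    from less.hyps[OF this b2'] less.prems y' obtain x
      where "x \<in> b1 - insert x' (b2 - {y'})" "insert y (b1 - {x}) \<in> B" by auto
    moreover from this(1) have "x \<in> b1 - b2" using y' by auto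
    ultimately show ?thesis by blast
  qed
qed

lemma matroid_image:
  assumes M: "matroid E B" and inj: "inj_on h E"
  shows "matroid (h ` E) ((`) h ` B)"
  unfolding matroid_def
proof (intro conjI ballI)
  show "finite (h ` E)" "(`) h ` B \<noteq> {}"
    using M by (simp_all add: matroid_finite_ground matroid_bases_nonempty)
  fix c assume "c \<in> (`) h ` B"
  then show "c \<subseteq> h ` E" using M by (auto dest: matroid_base_subset)
next
  fix c1 c2 x assume "c1 \<in> (`) h ` B" "c2 \<in> (`) h ` B" and x: "x \<in> c1 - c2"
  then obtain b1 b2 where b: "b1 \<in> B" "c1 = h ` b1" "b2 \<in> B" "c2 = h ` b2" by blast
  have sub: "b1 \<subseteq> E" "b2 \<subseteq> E" using M b by (auto dest: matroid_base_subset)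
  obtain u where u: "u \<in> b1 - b2" "x = h u" using x b by blast
  from matroid_exchange[OF M b(1,3) u(1)] obtain v
    where v: "v \<in> b2 - b1" "insert v (b1 - {u}) \<in> B" by blast
  have "h v \<in> c2 - c1" using v b sub inj by (auto simp: inj_on_def)
  moreover have "h ` insert v (b1 - {u}) = insert (h v) (c1 - {x})"
    using u v b sub inj by (auto simp: inj_on_def)
  then have "insert (h v) (c1 - {x}) \<in> (`) h ` B" using v(2) by (metis imageI)
  ultimately show "\<exists>y\<in>c2 - c1. insert y (c1 - {x}) \<in> (`) h ` B" by blast
qed

lemma matroid_minor:
  assumes M: "matroid E B" and "D \<subseteq> E" and "\<exists>b\<in>B. C \<subseteq> b \<and> b \<subseteq> D"
  shows "matroid (D - C) {b - C | b. b \<in> B \<and> C \<subseteq> b \<and> b \<subseteq> D}"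
  unfolding matroid_def
proof (intro conjI ballI)
  show "finite (D - C)" using M \<open>D \<subseteq> E\<close> by (meson finite_Diff finite_subset matroid_finite_ground)
  show "{b - C | b. b \<in> B \<and> C \<subseteq> b \<and> b \<subseteq> D} \<noteq> {}" using assms(3) by blast
  fix c assume "c \<in> {b - C | b. b \<in> B \<and> C \<subseteq> b \<and> b \<subseteq> D}"
  then show "c \<subseteq> D - C" by blast
next
  fix c1 c2 x assume "c1 \<in> {b - C | b. b \<in> B \<and> C \<subseteq> b \<and> b \<subseteq> D}"
    and "c2 \<in> {b - C | b. b \<in> B \<and> C \<subseteq> b \<and> b \<subseteq> D}" and x: "x \<in> c1 - c2"
  then obtain b1 b2 where b: "b1 \<in> B" "C \<subseteq> b1" "b1 \<subseteq> D" "c1 = b1 - C"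
    "b2 \<in> B" "C \<subseteq> b2" "b2 \<subseteq> D" "c2 = b2 - C" by blast
  from x b have "x \<in> b1 - b2" by blast
  from matroid_exchange[OF M b(1,5) this] obtain y
    where y: "y \<in> b2 - b1" "insert y (b1 - {x}) \<in> B" by blast
  have "insert y (c1 - {x}) = insert y (b1 - {x}) - C"
    and "C \<subseteq> insert y (b1 - {x})" "insert y (b1 - {x}) \<subseteq> D" "y \<in> c2 - c1"
    using x y b by blast+
  then show "\<exists>y\<in>c2 - c1. insert y (c1 - {x}) \<in> {b - C | b. b \<in> B \<and> C \<subseteq> b \<and> b \<subseteq> D}"
    using y by blast
qed

lemma maxsets_memI: "X \<in> F \<Longrightarrow> (\<And>Y. Y \<in> F \<Longrightarrow> X \<subseteq> Y \<Longrightarrow> Y = X) \<Longrightarrow> X \<in> maxsets F"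
  unfolding maxsets_def by blast

lemma minsets_memI: "X \<in> F \<Longrightarrow> (\<And>Y. Y \<in> F \<Longrightarrow> Y \<subseteq> X \<Longrightarrow> Y = X) \<Longrightarrow> X \<in> minsets F"
  unfolding minsets_def by blast

lemma rankb_eqI: "b \<in> B \<Longrightarrow> (\<And>b'. b' \<in> B \<Longrightarrow> card b' = k) \<Longrightarrow> rankb B = k"
  unfolding rankb_def using someI[of "\<lambda>b. b \<in> B" b] by blast

lemma inj_on_image_subset_iff:
  assumes "inj_on f C" "A \<subseteq> C" "B \<subseteq> C"
  shows "f ` A \<subseteq> f ` B \<longleftrightarrow> A \<subseteq> B"
  using inj_on_image_mem_iff[OF assms(1)] assms(2,3) by blast

lemma blocks_eqI:
  assumes "\<And>X X'. X \<subseteq> A \<Longrightarrow> X' \<subseteq> A \<Longrightarrow>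
    (\<exists>Y\<subseteq>B. X \<union> Y \<in> M \<and> X' \<union> Y \<in> M) \<longleftrightarrow> (\<exists>Y\<subseteq>B'. X \<union> Y \<in> M' \<and> X' \<union> Y \<in> M')"
  shows "blocks A B M = blocks A B' M'"
proof -
  have "(\<exists>Y\<subseteq>B. X \<union> Y \<in> M) \<longleftrightarrow> (\<exists>Y\<subseteq>B'. X \<union> Y \<in> M')" if "X \<subseteq> A" for X
    using assms[OF that that] by simp
  then have parts: "parts A B M = parts A B' M'"
    unfolding parts_def by (intro Collect_cong) (metis (no_types, lifting))
  have "(X, X') \<in> partrel A B M \<longleftrightarrow> (X, X') \<in> partrel A B' M'" for X X'
  proof (cases "X \<in> parts A B M \<and> X' \<in> parts A B M")
    case True
    then have "X \<subseteq> A" "X' \<subseteq> A" unfolding parts_def by blast+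
    with True show ?thesis unfolding partrel_def parts using assms by simp
  next
    case False
    then show ?thesis unfolding partrel_def parts by blast
  qed
  then have "partrel A B M = partrel A B' M'" by (simp add: set_eq_iff)
  then show ?thesis unfolding blocks_def parts by simp
qed

lemma dualb_mem_iff: "(\<And>b. b \<in> B \<Longrightarrow> b \<subseteq> E) \<Longrightarrow> c \<subseteq> E \<Longrightarrow> c \<in> dualb E B \<longleftrightarrow> E - c \<in> B"
  unfolding dualb_def by (auto simp: double_diff)

section \<open>Linking through a middle set\<close>

context
  fixes S P Q :: "'a set" and A B :: "'a set set"
  assumes fin: "finite P" "finite Q"
    and disj: "S \<inter> P = {}" "P \<inter> Q = {}" "S \<inter> Q = {}"
    and A: "matroid (S \<union> P) A"
    and B_sub: "\<And>b. b \<in> B \<Longrightarrow> b \<subseteq> P \<union> Q"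
    and B_card: "\<And>b b'. b \<in> B \<Longrightarrow> b' \<in> B \<Longrightarrow> card b = card b'"
    and complement: "\<And>b. b \<in> B \<Longrightarrow> \<exists>a\<in>A. a \<inter> P = P - b"
begin

private lemma A_sub: "a \<in> A \<Longrightarrow> a \<subseteq> S \<union> P"
  using A by (rule matroid_base_subset)

private lemma finite_union: "a \<in> A \<Longrightarrow> b \<in> B \<Longrightarrow> finite (a \<union> b)"
  using A fin B_sub by (meson finite_Un finite_subset matroid_base_finite)

private lemma card_union: "a \<in> A \<Longrightarrow> b \<in> B \<Longrightarrow> a \<inter> b = {} \<Longrightarrow> card (a \<union> b) = card a + card b"
  using finite_union by (simp add: card_Un_disjoint)

lemma unionb_eq_disjoint_unions:
  "unionb A B = {a \<union> b | a b. a \<in> A \<and> b \<in> B \<and> a \<inter> b = {}}"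
proof (rule set_eqI, rule iffI)
  let ?U = "{a \<union> b | a b. a \<in> A \<and> b \<in> B}"
  fix u assume "u \<in> unionb A B"
  then have max: "\<And>u'. u' \<in> ?U \<Longrightarrow> u \<subseteq> u' \<Longrightarrow> u' = u"
    and "u \<in> ?U" unfolding unionb_def maxsets_def by blast+
  then obtain a b where ab: "u = a \<union> b" "a \<in> A" "b \<in> B" by blast
  have "a \<inter> b = {}"
  proof (rule ccontr)
    assume "a \<inter> b \<noteq> {}"
    then obtain z where z: "z \<in> a" "z \<in> b" by blast
    obtain c where c: "c \<in> A" "c \<inter> P = P - b" using complement ab(3) by blast
    have "z \<in> P" using z A_sub[OF ab(2)] B_sub[OF ab(3)] disj by blast
    with c z have "z \<in> a - c" by blast
    from matroid_exchange[OF A ab(2) c(1) this] obtain v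
      where v: "v \<in> c - a" "insert v (a - {z}) \<in> A" by blast
    have "v \<notin> b" using v c A_sub[OF c(1)] B_sub[OF ab(3)] disj by blast
    have "insert v (a - {z}) \<union> b \<in> ?U" using v(2) ab(3) by blast
    moreover have "u \<subseteq> insert v (a - {z}) \<union> b" using ab(1) z by blast
    ultimately have "insert v (a - {z}) \<union> b = u" by (rule max)
    then show False using v \<open>v \<notin> b\<close> ab by blast
  qed
  then show "u \<in> {a \<union> b | a b. a \<in> A \<and> b \<in> B \<and> a \<inter> b = {}}" using ab by blast
next
  let ?U = "{a \<union> b | a b. a \<in> A \<and> b \<in> B}"
  fix u assume "u \<in> {a \<union> b | a b. a \<in> A \<and> b \<in> B \<and> a \<inter> b = {}}"
  then obtain a b where ab: "u = a \<union> b" "a \<in> A" "b \<in> B" "a \<inter> b = {}" by blast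
  have "u' = u" if u': "u' \<in> ?U" and "u \<subseteq> u'" for u'
  proof -
    obtain a' b' where ab': "u' = a' \<union> b'" "a' \<in> A" "b' \<in> B" using u' by blast
    have "card u' \<le> card a' + card b'" unfolding ab'(1) by (rule card_Un_le)
    also have "\<dots> = card u"
      using ab card_union matroid_bases_card_eq[OF A ab'(2) ab(2)] B_card[OF ab'(3) ab(3)] by simp
    finally have "card u' \<le> card u" .
    moreover have "finite u'" unfolding ab'(1) using ab'(2,3) by (rule finite_union)
    ultimately show ?thesis using card_seteq \<open>u \<subseteq> u'\<close> by blast
  qed
  moreover have "u \<in> ?U" using ab by blast
  ultimately show "u \<in> unionb A B" unfolding unionb_def maxsets_def by blast
qed

private lemma union_Int_outer:
  "a \<in> A \<Longrightarrow> b \<in> B \<Longrightarrow> (a \<union> b) \<inter> (S \<union> Q) = (a \<inter> S) \<union> (b \<inter> Q)"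
  using A_sub B_sub disj by blast

private lemma card_union_split:
  assumes "a \<in> A" "b \<in> B" "a \<inter> b = {}"
  shows "card ((a \<union> b) \<inter> (S \<union> Q)) + card ((a \<union> b) \<inter> P) = card a + card b"
proof -
  have "card (a \<union> b) = card ((a \<union> b) \<inter> (S \<union> Q)) + card ((a \<union> b) - (S \<union> Q))"
    using finite_union[OF assms(1,2)] by (rule card_Int_Diff)
  moreover have "(a \<union> b) - (S \<union> Q) = (a \<union> b) \<inter> P"
    using A_sub[OF assms(1)] B_sub[OF assms(2)] disj by blast
  ultimately show ?thesis using card_union[OF assms] by simp
qed

private lemma covers_middle_if_minimal:
  assumes ab: "a \<in> A" "b \<in> B" "a \<inter> b = {}"
    and min: "\<And>a' b'. a' \<in> A \<Longrightarrow> b' \<in> B \<Longrightarrow> a' \<inter> b' = {} \<Longrightarrow>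
      (a' \<union> b') \<inter> (S \<union> Q) \<subseteq> (a \<union> b) \<inter> (S \<union> Q) \<Longrightarrow> (a' \<union> b') \<inter> (S \<union> Q) = (a \<union> b) \<inter> (S \<union> Q)"
  shows "P \<subseteq> a \<union> b"
proof (rule ccontr)
  assume "\<not> P \<subseteq> a \<union> b"
  then obtain p where p: "p \<in> P" "p \<notin> a" "p \<notin> b" by blast
  obtain c where c: "c \<in> A" "c \<inter> P = P - b" using complement ab(2) by blast
  from c p have "p \<in> c - a" by blast
  from matroid_dual_exchange[OF A ab(1) c(1) this] obtain e
    where e: "e \<in> a - c" "insert p (a - {e}) \<in> A" by blast
  have "e \<in> S" using e c ab(3) A_sub[OF ab(1)] by blast
  have "insert p (a - {e}) \<inter> b = {}" "(insert p (a - {e}) \<union> b) \<inter> (S \<union> Q) \<subseteq> (a \<union> b) \<inter> (S \<union> Q)"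
    using ab(3) p disj by blast+
  from min[OF e(2) ab(2) this] have "(insert p (a - {e}) \<union> b) \<inter> (S \<union> Q) = (a \<union> b) \<inter> (S \<union> Q)" .
  moreover have "e \<in> (a \<union> b) \<inter> (S \<union> Q)" using e(1) \<open>e \<in> S\<close> by blast
  moreover have "e \<notin> (insert p (a - {e}) \<union> b) \<inter> (S \<union> Q)" using ab(3) e(1) p(1) disj by blast
  ultimately show False by blast
qed

private lemma minimal_if_covers_middle:
  assumes ab: "a \<in> A" "b \<in> B" "a \<inter> b = {}" "P \<subseteq> a \<union> b"
    and ab': "a' \<in> A" "b' \<in> B" "a' \<inter> b' = {}"
    and sub: "(a' \<union> b') \<inter> (S \<union> Q) \<subseteq> (a \<union> b) \<inter> (S \<union> Q)"
  shows "(a' \<union> b') \<inter> (S \<union> Q) = (a \<union> b) \<inter> (S \<union> Q)"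
proof -
  have "card ((a \<union> b) \<inter> P) = card P" using ab(4) by (simp add: Int_absorb1)
  moreover have "card ((a' \<union> b') \<inter> P) \<le> card P" using fin by (simp add: card_mono)
  moreover have "card a' = card a" "card b' = card b"
    using matroid_bases_card_eq[OF A ab'(1) ab(1)] B_card[OF ab'(2) ab(2)] .
  ultimately have "card ((a \<union> b) \<inter> (S \<union> Q)) \<le> card ((a' \<union> b') \<inter> (S \<union> Q))"
    using card_union_split[OF ab(1-3)] card_union_split[OF ab'] by linarith
  moreover have "finite ((a \<union> b) \<inter> (S \<union> Q))" using finite_union[OF ab(1,2)] by simp
  ultimately show ?thesis using card_seteq sub by blast
qed

lemma linkb_eq_split_middle:
  "linkb (S \<union> P) A (P \<union> Q) B = {(a \<inter> S) \<union> (b \<inter> Q) | a b. a \<in> A \<and> b \<in> B \<and> a \<inter> b = {} \<and> P \<subseteq> a \<union> b}"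
    (is "_ = ?R")
proof -
  let ?proj = "\<lambda>u. u \<inter> (S \<union> Q)"
  let ?D = "{a \<union> b | a b. a \<in> A \<and> b \<in> B \<and> a \<inter> b = {}}"
  have "(S \<union> P - (P \<union> Q)) \<union> (P \<union> Q - (S \<union> P)) = S \<union> Q" using disj by blast
  then have link: "linkb (S \<union> P) A (P \<union> Q) B = minsets (?proj ` ?D)"
    unfolding linkb_def contrb_def unionb_eq_disjoint_unions by simp
  have "minsets (?proj ` ?D) = ?R"
  proof (rule set_eqI, rule iffI)
    fix w assume w: "w \<in> minsets (?proj ` ?D)"
    then obtain a b where ab: "a \<in> A" "b \<in> B" "a \<inter> b = {}" "w = ?proj (a \<union> b)"
      unfolding minsets_def by blast
    have "?proj (a' \<union> b') = ?proj (a \<union> b)"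
      if "a' \<in> A" "b' \<in> B" "a' \<inter> b' = {}" "?proj (a' \<union> b') \<subseteq> ?proj (a \<union> b)" for a' b'
    proof -
      from that(1-3) have "?proj (a' \<union> b') \<in> ?proj ` ?D" by blast
      with w that(4) show ?thesis unfolding minsets_def ab(4) by blast
    qed
    then have "P \<subseteq> a \<union> b" by (rule covers_middle_if_minimal[OF ab(1-3)])
    moreover have "w = (a \<inter> S) \<union> (b \<inter> Q)" using ab(4) union_Int_outer[OF ab(1,2)] by simp
    ultimately show "w \<in> ?R" using ab(1-3) by blast
  next
    fix w assume "w \<in> ?R"
    then obtain a b where ab: "a \<in> A" "b \<in> B" "a \<inter> b = {}" "P \<subseteq> a \<union> b"
      and "w = (a \<inter> S) \<union> (b \<inter> Q)" by blast
    then have w: "w = ?proj (a \<union> b)" using union_Int_outer by simp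
    show "w \<in> minsets (?proj ` ?D)"
    proof (rule minsets_memI)
      show "w \<in> ?proj ` ?D" using ab(1-3) w by blast
      fix w' assume "w' \<in> ?proj ` ?D" "w' \<subseteq> w"
      then show "w' = w" unfolding w using minimal_if_covers_middle[OF ab] by blast
    qed
  qed
  with link show ?thesis by simp
qed

end

section \<open>Matroids on a disjoint union\<close>

locale split_matroid =
  fixes S Q :: "'a set" and M :: "'a set set"
  assumes disjoint: "S \<inter> Q = {}" and is_matroid: "matroid (S \<union> Q) M"
begin

lemma finite_S: "finite S" and finite_Q: "finite Q"
  using matroid_finite_ground[OF is_matroid] by simp_all

lemma base_subset: "b \<in> M \<Longrightarrow> b \<subseteq> S \<union> Q"
  using is_matroid by (rule matroid_base_subset)

lemma base_finite: "b \<in> M \<Longrightarrow> finite b"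
  using is_matroid by (rule matroid_base_finite)

lemma base_split: "b \<in> M \<Longrightarrow> (b \<inter> S) \<union> (b \<inter> Q) = b"
  using base_subset by blast

lemma card_base_eq: "b \<in> M \<Longrightarrow> b' \<in> M \<Longrightarrow> card b = card b'"
  using is_matroid by (rule matroid_bases_card_eq)

lemma card_base_split: "b \<in> M \<Longrightarrow> card b = card (b \<inter> S) + card (b \<inter> Q)"
  using card_Un_disjoint[of "b \<inter> S" "b \<inter> Q"] base_split[of b] finite_S finite_Q disjoint by auto

lemma card_parts_compare:
  "b \<in> M \<Longrightarrow> b' \<in> M \<Longrightarrow> card (b \<inter> Q) \<le> card (b' \<inter> Q) \<longleftrightarrow> card (b' \<inter> S) \<le> card (b \<inter> S)"
  using card_base_split card_base_eq by (metis add_le_cancel_left add_le_cancel_right)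

definition min_Q_base :: "'a set \<Rightarrow> bool" where
  "min_Q_base m \<longleftrightarrow> m \<in> M \<and> (\<forall>m'\<in>M. card (m \<inter> Q) \<le> card (m' \<inter> Q))"

definition max_Q_base :: "'a set \<Rightarrow> bool" where
  "max_Q_base m \<longleftrightarrow> m \<in> M \<and> (\<forall>m'\<in>M. card (m' \<inter> Q) \<le> card (m \<inter> Q))"

lemma base_with_min_Q_part:
  assumes m0: "min_Q_base m0" and I: "I \<subseteq> S" and b: "b \<in> M" "I \<subseteq> b"
  shows "\<exists>c\<in>M. I \<subseteq> c \<and> c \<inter> Q = m0 \<inter> Q"
proof -
  let ?Y0 = "m0 \<inter> Q"
  obtain c where c: "c \<in> M" "I \<subseteq> c"
    and c_min: "\<And>c'. c' \<in> M \<and> I \<subseteq> c' \<Longrightarrow> card (c - (S \<union> ?Y0)) \<le> card (c' - (S \<union> ?Y0))"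
    using ex_has_least_nat[of "\<lambda>c. c \<in> M \<and> I \<subseteq> c" b "\<lambda>c. card (c - (S \<union> ?Y0))"] b by blast
  have "c \<inter> Q \<subseteq> ?Y0"
  proof
    fix e assume e: "e \<in> c \<inter> Q"
    show "e \<in> ?Y0"
    proof (rule ccontr)
      assume "e \<notin> ?Y0"
      with e have e': "e \<in> c - m0" "e \<in> c - (S \<union> ?Y0)" using disjoint by blast+
      from matroid_exchange[OF is_matroid c(1) _ e'(1)] m0 obtain y
        where y: "y \<in> m0 - c" "insert y (c - {e}) \<in> M" by (auto simp: min_Q_base_def)
      have "I \<subseteq> insert y (c - {e})" using c(2) e I disjoint by blast
      then have "card (c - (S \<union> ?Y0)) \<le> card (insert y (c - {e}) - (S \<union> ?Y0))"
        using c_min y(2) by blast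
      also have "insert y (c - {e}) - (S \<union> ?Y0) = (c - (S \<union> ?Y0)) - {e}"
        using y base_subset[of m0] m0 by (auto simp: min_Q_base_def)
      also have "card \<dots> < card (c - (S \<union> ?Y0))"
        using e' base_finite[OF c(1)] by (intro card_Diff1_less) auto
      finally show False by simp
    qed
  qed
  moreover have "card ?Y0 \<le> card (c \<inter> Q)" using m0 c(1) by (simp add: min_Q_base_def)
  ultimately have "c \<inter> Q = ?Y0" using finite_Q card_seteq by blast
  then show ?thesis using c by blast
qed

lemma base_with_max_Q_part:
  assumes m1: "max_Q_base m1" and b: "b \<in> M"
  shows "\<exists>c\<in>M. c \<inter> S \<subseteq> b \<inter> S \<and> c \<inter> Q = m1 \<inter> Q"
proof -
  let ?Y1 = "m1 \<inter> Q"
  obtain c where c: "c \<in> M" "c \<inter> S \<subseteq> b \<inter> S"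
    and c_min: "\<And>c'. c' \<in> M \<and> c' \<inter> S \<subseteq> b \<inter> S \<Longrightarrow> card (c - ?Y1) \<le> card (c' - ?Y1)"
    using ex_has_least_nat[of "\<lambda>c. c \<in> M \<and> c \<inter> S \<subseteq> b \<inter> S" b "\<lambda>c. card (c - ?Y1)"] b by blast
  have "?Y1 \<subseteq> c \<inter> Q"
  proof
    fix e assume e: "e \<in> ?Y1"
    show "e \<in> c \<inter> Q"
    proof (rule ccontr)
      assume "e \<notin> c \<inter> Q"
      with e have "e \<in> m1 - c" by blast
      from matroid_dual_exchange[OF is_matroid c(1) _ this] m1 obtain x
        where x: "x \<in> c - m1" "insert e (c - {x}) \<in> M" by (auto simp: max_Q_base_def)
      have "insert e (c - {x}) \<inter> S \<subseteq> b \<inter> S" using c(2) e disjoint by blast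
      then have "card (c - ?Y1) \<le> card (insert e (c - {x}) - ?Y1)" using c_min x(2) by blast
      also have "insert e (c - {x}) - ?Y1 = (c - ?Y1) - {x}" using e by blast
      also have "card \<dots> < card (c - ?Y1)"
        using x base_finite[OF c(1)] by (intro card_Diff1_less) auto
      finally show False by simp
    qed
  qed
  moreover have "card (c \<inter> Q) \<le> card ?Y1" using m1 c(1) by (simp add: max_Q_base_def)
  ultimately have "?Y1 = c \<inter> Q" using finite_Q card_seteq by blast
  then show ?thesis using c by blast
qed

lemma base_shrink_S_part:
  assumes m: "m \<in> M" and c: "c \<in> M" "m \<inter> S \<subseteq> c \<inter> S" "Y \<subseteq> c" and "Y \<subseteq> Q"
  shows "\<exists>b\<in>M. b \<inter> S = m \<inter> S \<and> Y \<subseteq> b"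
proof -
  obtain b where b: "b \<in> M" "m \<inter> S \<subseteq> b \<inter> S" "Y \<subseteq> b"
    and b_min: "\<And>b'. b' \<in> M \<and> m \<inter> S \<subseteq> b' \<inter> S \<and> Y \<subseteq> b' \<Longrightarrow> card (b \<inter> S) \<le> card (b' \<inter> S)"
    using ex_has_least_nat[of "\<lambda>b. b \<in> M \<and> m \<inter> S \<subseteq> b \<inter> S \<and> Y \<subseteq> b" c "\<lambda>b. card (b \<inter> S)"] c
    by blast
  have "b \<inter> S \<subseteq> m \<inter> S"
  proof
    fix x assume x: "x \<in> b \<inter> S"
    show "x \<in> m \<inter> S"
    proof (rule ccontr)
      assume "x \<notin> m \<inter> S"
      with x have "x \<in> b - m" by blast
      from matroid_exchange[OF is_matroid b(1) m this] obtain y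
        where y: "y \<in> m - b" "insert y (b - {x}) \<in> M" by blast
      have "m \<inter> S \<subseteq> insert y (b - {x}) \<inter> S" "Y \<subseteq> insert y (b - {x})"
        using b(2,3) \<open>x \<notin> m \<inter> S\<close> x \<open>Y \<subseteq> Q\<close> disjoint by blast+
      then have "card (b \<inter> S) \<le> card (insert y (b - {x}) \<inter> S)" using b_min y(2) by blast
      also have "insert y (b - {x}) \<inter> S = (b \<inter> S) - {x}" using y b(2) by blast
      also have "card \<dots> < card (b \<inter> S)" using x finite_S by (intro card_Diff1_less) auto
      finally show False by simp
    qed
  qed
  then show ?thesis using b by blast
qed

lemma base_bound_Q_part:
  assumes "Y0 \<subseteq> Y1" and b: "b \<in> M" "Y0 \<subseteq> b"
    and c: "c \<in> M" "c \<inter> S \<subseteq> b \<inter> S" "c \<inter> Q = Y1"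
  shows "\<exists>b'\<in>M. b' \<inter> S = b \<inter> S \<and> Y0 \<subseteq> b' \<and> b' \<inter> Q \<subseteq> Y1"
proof -
  obtain d where d: "d \<in> M" "d \<inter> S = b \<inter> S" "Y0 \<subseteq> d"
    and d_min: "\<And>d'. d' \<in> M \<and> d' \<inter> S = b \<inter> S \<and> Y0 \<subseteq> d' \<Longrightarrow> card (d \<inter> Q - Y1) \<le> card (d' \<inter> Q - Y1)"
    using ex_has_least_nat[of "\<lambda>d. d \<in> M \<and> d \<inter> S = b \<inter> S \<and> Y0 \<subseteq> d" b "\<lambda>d. card (d \<inter> Q - Y1)"] b
    by blast
  have "d \<inter> Q \<subseteq> Y1"
  proof
    fix q assume q: "q \<in> d \<inter> Q"
    show "q \<in> Y1"
    proof (rule ccontr)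
      assume "q \<notin> Y1"
      with q c(3) have "q \<in> d - c" by blast
      from matroid_exchange[OF is_matroid d(1) c(1) this] obtain y
        where y: "y \<in> c - d" "insert y (d - {q}) \<in> M" by blast
      have "y \<in> Y1" using y c d(2) base_subset[OF c(1)] by blast
      then have "insert y (d - {q}) \<inter> S = b \<inter> S" "Y0 \<subseteq> insert y (d - {q})"
        using d(2,3) q \<open>q \<notin> Y1\<close> c(3) \<open>Y0 \<subseteq> Y1\<close> disjoint by blast+
      then have "card (d \<inter> Q - Y1) \<le> card (insert y (d - {q}) \<inter> Q - Y1)" using d_min y(2) by blast
      also have "insert y (d - {q}) \<inter> Q - Y1 = (d \<inter> Q - Y1) - {q}" using \<open>y \<in> Y1\<close> by blast
      also have "card \<dots> < card (d \<inter> Q - Y1)"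
        using q \<open>q \<notin> Y1\<close> finite_Q by (intro card_Diff1_less) auto
      finally show False by simp
    qed
  qed
  then show ?thesis using d by blast
qed

lemma base_in_window:
  assumes m0: "min_Q_base m0" and b1: "max_Q_base b1" and "m0 \<inter> Q \<subseteq> b1 \<inter> Q" and m: "m \<in> M"
  shows "\<exists>b\<in>M. b \<inter> S = m \<inter> S \<and> m0 \<inter> Q \<subseteq> b \<and> b \<inter> Q \<subseteq> b1 \<inter> Q"
proof -
  obtain c where c: "c \<in> M" "m \<inter> S \<subseteq> c" "c \<inter> Q = m0 \<inter> Q"
    using base_with_min_Q_part[OF m0, of "m \<inter> S" m] m by blast
  then obtain b where b: "b \<in> M" "b \<inter> S = m \<inter> S" "m0 \<inter> Q \<subseteq> b"
    using base_shrink_S_part[OF m c(1), of "m0 \<inter> Q"] by blast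
  obtain c' where "c' \<in> M" "c' \<inter> S \<subseteq> b \<inter> S" "c' \<inter> Q = b1 \<inter> Q"
    using base_with_max_Q_part[OF b1 b(1)] by blast
  from base_bound_Q_part[OF assms(3) b(1,3) this] b(2) show ?thesis by auto
qed

lemma exists_nested_extremal_bases:
  obtains m0 b1 where "min_Q_base m0" "max_Q_base b1" "m0 \<inter> Q \<subseteq> b1 \<inter> Q"
proof -
  obtain m where m: "m \<in> M" using matroid_bases_nonempty[OF is_matroid] by blast
  obtain m0 where m0: "min_Q_base m0"
    using ex_has_least_nat[of "\<lambda>m. m \<in> M" m "\<lambda>m. card (m \<inter> Q)"] m
    unfolding min_Q_base_def by blast
  obtain m1 where m1: "m1 \<in> M" and m1_min: "\<And>m'. m' \<in> M \<Longrightarrow> card (m1 \<inter> S) \<le> card (m' \<inter> S)"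
    using ex_has_least_nat[of "\<lambda>m. m \<in> M" m "\<lambda>m. card (m \<inter> S)"] m by blast
  obtain c where c: "c \<in> M" "m1 \<inter> S \<subseteq> c" "c \<inter> Q = m0 \<inter> Q"
    using base_with_min_Q_part[OF m0, of "m1 \<inter> S" m1] m1 by blast
  then obtain b1 where b1: "b1 \<in> M" "b1 \<inter> S = m1 \<inter> S" "m0 \<inter> Q \<subseteq> b1"
    using base_shrink_S_part[OF m1 c(1), of "m0 \<inter> Q"] by blast
  have "card (m' \<inter> Q) \<le> card (b1 \<inter> Q)" if "m' \<in> M" for m'
    using m1_min[OF that] b1(2) card_parts_compare[OF that b1(1)] by simp
  then have "max_Q_base b1" unfolding max_Q_base_def using b1(1) by blast
  with m0 b1(3) show ?thesis using that by blast
qed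

lemma card_S_part_eq:
  "b \<in> M \<Longrightarrow> b' \<in> M \<Longrightarrow> b \<inter> Q = b' \<inter> Q \<Longrightarrow> card (b \<inter> S) = card (b' \<inter> S)"
  using card_base_split[of b] card_base_split[of b'] card_base_eq[of b b'] by simp

lemma rank_restr_S:
  assumes m0: "min_Q_base m0"
  shows "rankb (restrb M S) = card (m0 \<inter> S)"
proof -
  let ?F = "{I. I \<subseteq> S \<and> (\<exists>b\<in>M. I \<subseteq> b)}"
  have m0M: "m0 \<in> M" using m0 by (simp add: min_Q_base_def)
  have extend: "\<exists>c\<in>M. I \<subseteq> c \<inter> S \<and> card (c \<inter> S) = card (m0 \<inter> S)" if "I \<in> ?F" for I
  proof -
    from that obtain b where "I \<subseteq> S" "b \<in> M" "I \<subseteq> b" by blast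
    then obtain c where "c \<in> M" "I \<subseteq> c" "c \<inter> Q = m0 \<inter> Q"
      using base_with_min_Q_part[OF m0] by blast
    with \<open>I \<subseteq> S\<close> show ?thesis using card_S_part_eq[OF _ m0M] by blast
  qed
  show ?thesis unfolding restrb_def
  proof (rule rankb_eqI)
    show "m0 \<inter> S \<in> maxsets ?F"
    proof (rule maxsets_memI)
      show "m0 \<inter> S \<in> ?F" using m0M by blast
      fix J assume J: "J \<in> ?F" "m0 \<inter> S \<subseteq> J"
      then obtain c where c: "c \<in> M" "J \<subseteq> c \<inter> S" "card (c \<inter> S) = card (m0 \<inter> S)"
        using extend by blast
      then have "m0 \<inter> S = c \<inter> S" using J(2) finite_S card_seteq[of "c \<inter> S" "m0 \<inter> S"] by auto
      then show "J = m0 \<inter> S" using J(2) c(2) by blast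
    qed
    fix I assume "I \<in> maxsets ?F"
    then have I: "I \<in> ?F" "\<And>J. J \<in> ?F \<Longrightarrow> I \<subseteq> J \<Longrightarrow> J = I" unfolding maxsets_def by blast+
    from extend[OF I(1)] obtain c where c: "c \<in> M" "I \<subseteq> c \<inter> S" "card (c \<inter> S) = card (m0 \<inter> S)"
      by blast
    have "c \<inter> S \<in> ?F" using c(1) by blast
    with I(2) c(2) have "c \<inter> S = I" by blast
    with c(3) show "card I = card (m0 \<inter> S)" by simp
  qed
qed

lemma rank_contr_S:
  assumes b1: "max_Q_base b1"
  shows "rankb (contrb M S) = card (b1 \<inter> S)"
proof -
  have b1M: "b1 \<in> M" using b1 by (simp add: max_Q_base_def)
  show ?thesis unfolding contrb_def
  proof (rule rankb_eqI)
    show "b1 \<inter> S \<in> minsets ((\<lambda>b. b \<inter> S) ` M)"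
    proof (rule minsets_memI)
      show "b1 \<inter> S \<in> (\<lambda>b. b \<inter> S) ` M" using b1M by blast
      fix w assume "w \<in> (\<lambda>b. b \<inter> S) ` M" "w \<subseteq> b1 \<inter> S"
      then obtain c where c: "c \<in> M" "w = c \<inter> S" "c \<inter> S \<subseteq> b1 \<inter> S" by blast
      have "card (c \<inter> Q) \<le> card (b1 \<inter> Q)" using b1 c(1) by (simp add: max_Q_base_def)
      then have "card (b1 \<inter> S) \<le> card (c \<inter> S)" using card_parts_compare[OF c(1) b1M] by simp
      then show "w = b1 \<inter> S" using c(2,3) finite_S card_seteq[of "b1 \<inter> S" "c \<inter> S"] by auto
    qed
    fix w assume w: "w \<in> minsets ((\<lambda>b. b \<inter> S) ` M)"
    then obtain b where b: "b \<in> M" "w = b \<inter> S" unfolding minsets_def by blast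
    obtain c where c: "c \<in> M" "c \<inter> S \<subseteq> b \<inter> S" "c \<inter> Q = b1 \<inter> Q"
      using base_with_max_Q_part[OF b1 b(1)] by blast
    have "c \<inter> S = w" using w c b unfolding minsets_def by blast
    then show "card w = card (b1 \<inter> S)" using card_S_part_eq[OF c(1) b1M c(3)] by simp
  qed
qed

end

section \<open>Complete matroids\<close>

locale complete_matroid = split_matroid +
  assumes is_complete: "complete S Q M"
begin

lemma complete_swap:
  "X \<subseteq> S \<Longrightarrow> X' \<subseteq> S \<Longrightarrow> Y \<subseteq> Q \<Longrightarrow> Y' \<subseteq> Q \<Longrightarrow>
   X \<union> Y \<in> M \<Longrightarrow> X \<union> Y' \<in> M \<Longrightarrow> X' \<union> Y \<in> M \<Longrightarrow> X' \<union> Y' \<in> M"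
  using is_complete unfolding complete_def by blast

lemma base_swap:
  assumes "b1 \<in> M" "b2 \<in> M" "b3 \<in> M" "b1 \<inter> S = b2 \<inter> S" "b1 \<inter> Q = b3 \<inter> Q"
  shows "(b3 \<inter> S) \<union> (b2 \<inter> Q) \<in> M"
proof (rule complete_swap)
  show "(b1 \<inter> S) \<union> (b1 \<inter> Q) \<in> M" using assms(1) base_split by simp
  show "(b1 \<inter> S) \<union> (b2 \<inter> Q) \<in> M" using assms(2,4) base_split by simp
  show "(b3 \<inter> S) \<union> (b1 \<inter> Q) \<in> M" using assms(3,5) base_split by simp
qed auto

definition Q_equiv :: "'a set \<Rightarrow> 'a set \<Rightarrow> bool" where
  "Q_equiv Y Y' \<longleftrightarrow> Y \<subseteq> Q \<and> Y' \<subseteq> Q \<and> (\<exists>X\<subseteq>S. X \<union> Y \<in> M \<and> X \<union> Y' \<in> M)"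

lemma Q_equiv_sym: "Q_equiv Y Y' \<Longrightarrow> Q_equiv Y' Y"
  unfolding Q_equiv_def by blast

lemma Q_equiv_trans:
  assumes "Q_equiv Y Y'" "Q_equiv Y' Y''"
  shows "Q_equiv Y Y''"
proof -
  obtain X X' where "X \<subseteq> S" "X \<union> Y \<in> M" "X \<union> Y' \<in> M" "X' \<subseteq> S" "X' \<union> Y' \<in> M" "X' \<union> Y'' \<in> M"
    and Q: "Y \<subseteq> Q" "Y' \<subseteq> Q" "Y'' \<subseteq> Q" using assms unfolding Q_equiv_def by blast
  then have "X \<union> Y'' \<in> M" using complete_swap[of X' X Y' Y''] by blast
  with \<open>X \<subseteq> S\<close> \<open>X \<union> Y \<in> M\<close> Q show ?thesis unfolding Q_equiv_def by blast
qed

lemma Q_equiv_bases: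
  assumes "b0 \<in> M" "b2 \<in> M" "b0 \<inter> S = b2 \<inter> S"
  shows "Q_equiv (b2 \<inter> Q) (b0 \<inter> Q)"
  unfolding Q_equiv_def using assms base_split[of b0] base_split[of b2] by (metis inf_le2)

(* For g mapping Q onto a copy Q', these are the bases of (M)_{S'Q} <-> (M^* )_{S'Q'}
   for any copy S' of S; see dual_link_eq_linkb. *)
definition dual_link :: "('a \<Rightarrow> 'a) \<Rightarrow> 'a set set" where
  "dual_link g = {(b0 \<inter> Q) \<union> g ` (Q - b2) | b0 b2. b0 \<in> M \<and> b2 \<in> M \<and> b0 \<inter> S = b2 \<inter> S}"

lemma dual_link_memI:
  "b0 \<in> M \<Longrightarrow> b2 \<in> M \<Longrightarrow> b0 \<inter> S = b2 \<inter> S \<Longrightarrow> u = (b0 \<inter> Q) \<union> g ` (Q - b2) \<Longrightarrow> u \<in> dual_link g"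
  unfolding dual_link_def by blast

lemma dual_link_closest_representation:
  assumes "u \<in> dual_link g" "c0 \<in> M"
  obtains B0 B2 where "B0 \<in> M" "B2 \<in> M" "B0 \<inter> S = B2 \<inter> S" "u = (B0 \<inter> Q) \<union> g ` (Q - B2)"
    "\<forall>b\<in>M. b \<inter> Q = B0 \<inter> Q \<longrightarrow> card (B0 \<inter> S - c0 \<inter> S) \<le> card (b \<inter> S - c0 \<inter> S)"
proof -
  obtain b0 b2 where b: "b0 \<in> M" "b2 \<in> M" "b0 \<inter> S = b2 \<inter> S" "u = (b0 \<inter> Q) \<union> g ` (Q - b2)"
    using assms(1) unfolding dual_link_def by blast
  obtain B0 where B0: "B0 \<in> M \<and> B0 \<inter> Q = b0 \<inter> Q"
    and min: "\<forall>b. b \<in> M \<and> b \<inter> Q = b0 \<inter> Q \<longrightarrow> card (B0 \<inter> S - c0 \<inter> S) \<le> card (b \<inter> S - c0 \<inter> S)"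
    using ex_has_least_nat[of "\<lambda>b. b \<in> M \<and> b \<inter> Q = b0 \<inter> Q" b0 "\<lambda>b. card (b \<inter> S - c0 \<inter> S)"] b(1)
    by blast
  define B2 where "B2 = (B0 \<inter> S) \<union> (b2 \<inter> Q)"
  have B2: "B2 \<in> M" "B0 \<inter> S = B2 \<inter> S"
    unfolding B2_def using base_swap[OF b(1,2)] B0 b(3) disjoint by blast+
  have "Q - B2 = Q - b2" unfolding B2_def using disjoint by blast
  then have u: "u = (B0 \<inter> Q) \<union> g ` (Q - B2)" using B0 b(4) by simp
  have "\<forall>b\<in>M. b \<inter> Q = B0 \<inter> Q \<longrightarrow> card (B0 \<inter> S - c0 \<inter> S) \<le> card (b \<inter> S - c0 \<inter> S)"
    using min B0 by simp
  with B0 B2 u show ?thesis using that by blast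
qed

(* B0 is the representative of the first base whose S-part is closest to that of c0
   (dual_link_closest_representation); every exchange that would bring it closer is ruled out by
   no_closer_base, which settles the remaining cases. *)
context
  fixes g :: "'a \<Rightarrow> 'a" and B0 B2 c0 c2 :: "'a set"
  assumes inj: "inj_on g Q" and gQ: "g ` Q \<inter> Q = {}"
    and B: "B0 \<in> M" "B2 \<in> M" "B0 \<inter> S = B2 \<inter> S"
    and c: "c0 \<in> M" "c2 \<in> M" "c0 \<inter> S = c2 \<inter> S"
    and B0_min: "\<forall>b\<in>M. b \<inter> Q = B0 \<inter> Q \<longrightarrow> card (B0 \<inter> S - c0 \<inter> S) \<le> card (b \<inter> S - c0 \<inter> S)"
begin

private lemma no_closer_base:
  assumes "b \<in> M" "b \<inter> Q = B0 \<inter> Q" "e \<in> B0 \<inter> S - c0 \<inter> S" "b \<inter> S - c0 \<inter> S = (B0 \<inter> S - c0 \<inter> S) - {e}"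
  shows False
proof -
  have "card (b \<inter> S - c0 \<inter> S) < card (B0 \<inter> S - c0 \<inter> S)"
    unfolding assms(4) using assms(3) finite_S by (intro card_Diff1_less) auto
  moreover have "card (B0 \<inter> S - c0 \<inter> S) \<le> card (b \<inter> S - c0 \<inter> S)"
    using B0_min assms(1,2) by blast
  ultimately show False by simp
qed

private lemma copies_notin_Q: "g ` (Q - c2) \<inter> Q = {}" "g ` (Q - B2) \<inter> Q = {}"
  using gQ by blast+

private lemma copy_remove: "q \<in> Q \<Longrightarrow> g ` (Q - B2) - {g q} = g ` (Q - B2 - {q})"
  using inj_on_image_set_diff[OF inj, of "Q - B2" "{q}"] by auto

private lemma dual_link_exchange_Q_via_S:
  assumes x: "x \<in> B0 \<inter> Q" and y: "y \<in> c0 - B0" "y \<in> S" and B0': "insert y (B0 - {x}) \<in> M"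
  shows "\<exists>y\<in>((c0 \<inter> Q) \<union> g ` (Q - c2)) - ((B0 \<inter> Q) \<union> g ` (Q - B2)).
           insert y ((B0 \<inter> Q) \<union> g ` (Q - B2) - {x}) \<in> dual_link g"
proof -
  have "y \<in> c2 - B2" using y c(3) B(3) by blast
  from matroid_dual_exchange[OF is_matroid B(2) c(2) this] obtain e
    where e: "e \<in> B2 - c2" and B2': "insert y (B2 - {e}) \<in> M" by blast
  show ?thesis
  proof (cases "e \<in> Q")
    case True
    have "Q - insert y (B2 - {e}) = insert e (Q - B2)" using True e y(2) disjoint by blast
    then have "g ` (Q - insert y (B2 - {e})) = insert (g e) (g ` (Q - B2))" by simp
    moreover have "insert y (B0 - {x}) \<inter> Q = B0 \<inter> Q - {x}" using y(2) disjoint by blast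
    moreover have "g e \<notin> Q" "x \<notin> g ` (Q - B2)" using True x copies_notin_Q gQ by blast+
    ultimately have "insert (g e) ((B0 \<inter> Q) \<union> g ` (Q - B2) - {x})
        = (insert y (B0 - {x}) \<inter> Q) \<union> g ` (Q - insert y (B2 - {e}))" by blast
    moreover have "insert y (B0 - {x}) \<inter> S = insert y (B2 - {e}) \<inter> S"
      using B(3) x True disjoint by blast
    moreover have "g e \<in> ((c0 \<inter> Q) \<union> g ` (Q - c2)) - ((B0 \<inter> Q) \<union> g ` (Q - B2))"
      using True e \<open>g e \<notin> Q\<close> inj_on_image_mem_iff[OF inj, of e "Q - B2"] by blast
    ultimately show ?thesis using dual_link_memI[OF B0' B2'] by blast
  next
    case False
    with e have "e \<in> S" using base_subset[OF B(2)] by blast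
    define b where "b = (insert y (B2 - {e}) \<inter> S) \<union> (B0 \<inter> Q)"
    have "B2 \<inter> Q = insert y (B2 - {e}) \<inter> Q" using y(2) \<open>e \<in> S\<close> disjoint by blast
    with B(3) have "b \<in> M" unfolding b_def using base_swap[OF B(2) B(1) B2'] by simp
    moreover have "b \<inter> Q = B0 \<inter> Q" unfolding b_def using disjoint by blast
    moreover have "e \<in> B0 \<inter> S - c0 \<inter> S" using e \<open>e \<in> S\<close> B(3) c(3) by blast
    moreover have "b \<inter> S - c0 \<inter> S = (B0 \<inter> S - c0 \<inter> S) - {e}"
      unfolding b_def using y B(3) disjoint by blast
    ultimately have False by (rule no_closer_base)
    then show ?thesis ..
  qed
qed

lemma dual_link_exchange_Q:
  assumes x: "x \<in> B0 \<inter> Q" "x \<notin> c0"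
  shows "\<exists>y\<in>((c0 \<inter> Q) \<union> g ` (Q - c2)) - ((B0 \<inter> Q) \<union> g ` (Q - B2)).
           insert y ((B0 \<inter> Q) \<union> g ` (Q - B2) - {x}) \<in> dual_link g"
proof -
  from x have "x \<in> B0 - c0" by blast
  from matroid_exchange[OF is_matroid B(1) c(1) this] obtain y
    where y: "y \<in> c0 - B0" and B0': "insert y (B0 - {x}) \<in> M" by blast
  show ?thesis
  proof (cases "y \<in> Q")
    case True
    have "insert y ((B0 \<inter> Q) \<union> g ` (Q - B2) - {x}) = (insert y (B0 - {x}) \<inter> Q) \<union> g ` (Q - B2)"
      using True x(1) copies_notin_Q(2) by blast
    moreover have "insert y (B0 - {x}) \<inter> S = B2 \<inter> S" using B(3) True x(1) disjoint by blast
    moreover have "y \<in> ((c0 \<inter> Q) \<union> g ` (Q - c2)) - ((B0 \<inter> Q) \<union> g ` (Q - B2))"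
      using True y copies_notin_Q(2) by blast
    ultimately show ?thesis using dual_link_memI[OF B0' B(2)] by blast
  next
    case False
    then have "y \<in> S" using y base_subset[OF c(1)] by blast
    from dual_link_exchange_Q_via_S[OF x(1) y this B0'] show ?thesis .
  qed
qed

private lemma dual_link_exchange_copy_via_S:
  assumes q: "q \<in> Q - B2" and e: "e \<in> B2 - c2" "e \<in> S" and B2': "insert q (B2 - {e}) \<in> M"
  shows "\<exists>y\<in>((c0 \<inter> Q) \<union> g ` (Q - c2)) - ((B0 \<inter> Q) \<union> g ` (Q - B2)).
           insert y ((B0 \<inter> Q) \<union> g ` (Q - B2) - {g q}) \<in> dual_link g"
proof -
  from e B(3) c(3) have e': "e \<in> B0 \<inter> S - c0 \<inter> S" by blast
  then have "e \<in> B0 - c0" by blast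
  from matroid_exchange[OF is_matroid B(1) c(1) this] obtain y
    where y: "y \<in> c0 - B0" and B0': "insert y (B0 - {e}) \<in> M" by blast
  show ?thesis
  proof (cases "y \<in> Q")
    case True
    have "Q - insert q (B2 - {e}) = Q - B2 - {q}" using e(2) disjoint by blast
    moreover have "insert y (B0 - {e}) \<inter> Q = insert y (B0 \<inter> Q)" using True e(2) disjoint by blast
    moreover have "g q \<notin> B0 \<inter> Q" using gQ q by blast
    moreover have "g ` (Q - B2) - {g q} = g ` (Q - B2 - {q})" using q by (simp add: copy_remove)
    ultimately have "insert y ((B0 \<inter> Q) \<union> g ` (Q - B2) - {g q})
        = (insert y (B0 - {e}) \<inter> Q) \<union> g ` (Q - insert q (B2 - {e}))"
      by auto
    moreover have "insert y (B0 - {e}) \<inter> S = insert q (B2 - {e}) \<inter> S"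
      using B(3) True q disjoint by blast
    moreover have "y \<in> ((c0 \<inter> Q) \<union> g ` (Q - c2)) - ((B0 \<inter> Q) \<union> g ` (Q - B2))"
      using True y copies_notin_Q(2) by blast
    ultimately show ?thesis using dual_link_memI[OF B0' B2'] by blast
  next
    case False
    then have "y \<in> S" using y base_subset[OF c(1)] by blast
    have "insert y (B0 - {e}) \<inter> Q = B0 \<inter> Q" using \<open>y \<in> S\<close> e(2) disjoint by blast
    moreover have "insert y (B0 - {e}) \<inter> S - c0 \<inter> S = (B0 \<inter> S - c0 \<inter> S) - {e}"
      using y \<open>y \<in> S\<close> by blast
    ultimately have False using no_closer_base[OF B0' _ e'] by blast
    then show ?thesis ..
  qed
qed

lemma dual_link_exchange_copy:
  assumes q: "q \<in> Q - B2" "q \<in> c2"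
  shows "\<exists>y\<in>((c0 \<inter> Q) \<union> g ` (Q - c2)) - ((B0 \<inter> Q) \<union> g ` (Q - B2)).
           insert y ((B0 \<inter> Q) \<union> g ` (Q - B2) - {g q}) \<in> dual_link g"
proof -
  from q have "q \<in> c2 - B2" by blast
  from matroid_dual_exchange[OF is_matroid B(2) c(2) this] obtain e
    where e: "e \<in> B2 - c2" and B2': "insert q (B2 - {e}) \<in> M" by blast
  show ?thesis
  proof (cases "e \<in> Q")
    case True
    have "Q - insert q (B2 - {e}) = insert e (Q - B2 - {q})" using True e q by blast
    then have "g ` (Q - insert q (B2 - {e})) = insert (g e) (g ` (Q - B2) - {g q})"
      using copy_remove q(1) by simp
    moreover have "g q \<notin> B0 \<inter> Q" using gQ q(1) by blast
    ultimately have "insert (g e) ((B0 \<inter> Q) \<union> g ` (Q - B2) - {g q})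
        = (B0 \<inter> Q) \<union> g ` (Q - insert q (B2 - {e}))" by blast
    moreover have "B0 \<inter> S = insert q (B2 - {e}) \<inter> S" using B(3) True q(1) disjoint by blast
    moreover have "g e \<in> ((c0 \<inter> Q) \<union> g ` (Q - c2)) - ((B0 \<inter> Q) \<union> g ` (Q - B2))"
      using True e gQ inj_on_image_mem_iff[OF inj, of e "Q - B2"] by blast
    ultimately show ?thesis using dual_link_memI[OF B(1) B2'] by blast
  next
    case False
    then have "e \<in> S" using e base_subset[OF B(2)] by blast
    from dual_link_exchange_copy_via_S[OF q(1) e this B2'] show ?thesis .
  qed
qed

end

lemma dual_link_matroid:
  assumes inj: "inj_on g Q" and gQ: "g ` Q \<inter> Q = {}"
  shows "matroid (Q \<union> g ` Q) (dual_link g)"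
  unfolding matroid_def
proof (intro conjI ballI)
  show "finite (Q \<union> g ` Q)" using finite_Q by blast
  obtain b where "b \<in> M" using matroid_bases_nonempty[OF is_matroid] by blast
  then show "dual_link g \<noteq> {}" using dual_link_memI by blast
  fix u assume "u \<in> dual_link g"
  then show "u \<subseteq> Q \<union> g ` Q" unfolding dual_link_def by blast
next
  fix u1 u2 x assume "u1 \<in> dual_link g" "u2 \<in> dual_link g" and x: "x \<in> u1 - u2"
  obtain c0 c2 where c: "c0 \<in> M" "c2 \<in> M" "c0 \<inter> S = c2 \<inter> S" "u2 = (c0 \<inter> Q) \<union> g ` (Q - c2)"
    using \<open>u2 \<in> dual_link g\<close> unfolding dual_link_def by blast
  obtain B0 B2 where B: "B0 \<in> M" "B2 \<in> M" "B0 \<inter> S = B2 \<inter> S" and u1: "u1 = (B0 \<inter> Q) \<union> g ` (Q - B2)"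
    and B0_min: "\<forall>b\<in>M. b \<inter> Q = B0 \<inter> Q \<longrightarrow> card (B0 \<inter> S - c0 \<inter> S) \<le> card (b \<inter> S - c0 \<inter> S)"
    using dual_link_closest_representation[OF \<open>u1 \<in> dual_link g\<close> c(1)] by blast
  note exchange = dual_link_exchange_Q[OF inj gQ B c(1-3) B0_min]
    dual_link_exchange_copy[OF inj gQ B c(1-3) B0_min]
  show "\<exists>y\<in>u2 - u1. insert y (u1 - {x}) \<in> dual_link g"
  proof (cases "x \<in> Q")
    case True
    then have "x \<in> B0 \<inter> Q" "x \<notin> c0" using x gQ unfolding u1 c(4) by blast+
    from exchange(1)[OF this] show ?thesis unfolding u1 c(4) .
  next
    case False
    then obtain q where q: "q \<in> Q - B2" "x = g q" using x unfolding u1 by blast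
    then have "q \<in> c2" using x unfolding c(4) by blast
    from exchange(2)[OF q(1) this] show ?thesis unfolding u1 c(4) q(2) .
  qed
qed

lemma Q_equiv_swap: "Q_equiv Y Y' \<Longrightarrow> X \<subseteq> S \<Longrightarrow> X \<union> Y \<in> M \<Longrightarrow> X \<union> Y' \<in> M"
  unfolding Q_equiv_def using complete_swap by blast

lemma dual_link_eq: "dual_link g = {Y' \<union> g ` (Q - Y) | Y Y'. Q_equiv Y Y'}"
proof (rule set_eqI, rule iffI)
  fix u assume "u \<in> dual_link g"
  then obtain b0 b2 where "b0 \<in> M" "b2 \<in> M" "b0 \<inter> S = b2 \<inter> S" "u = (b0 \<inter> Q) \<union> g ` (Q - b2)"
    unfolding dual_link_def by blast
  moreover have "Q - b2 = Q - (b2 \<inter> Q)" by blast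
  ultimately have "u = (b0 \<inter> Q) \<union> g ` (Q - (b2 \<inter> Q))" "Q_equiv (b2 \<inter> Q) (b0 \<inter> Q)"
    using Q_equiv_bases by simp_all
  then show "u \<in> {Y' \<union> g ` (Q - Y) | Y Y'. Q_equiv Y Y'}"
    unfolding mem_Collect_eq by (intro exI[of _ "b2 \<inter> Q"] exI[of _ "b0 \<inter> Q"] conjI)
next
  fix u assume "u \<in> {Y' \<union> g ` (Q - Y) | Y Y'. Q_equiv Y Y'}"
  then obtain X Y Y' where "X \<subseteq> S" "Y \<subseteq> Q" "Y' \<subseteq> Q" "X \<union> Y \<in> M" "X \<union> Y' \<in> M" "u = Y' \<union> g ` (Q - Y)"
    unfolding Q_equiv_def by blast
  moreover from this have "(X \<union> Y') \<inter> S = (X \<union> Y) \<inter> S" "(X \<union> Y') \<inter> Q = Y'" "Q - (X \<union> Y) = Q - Y"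
    using disjoint by blast+
  ultimately show "u \<in> dual_link g" using dual_link_memI[of "X \<union> Y'" "X \<union> Y"] by simp
qed

end

section \<open>Minors through a window of Q-parts\<close>

locale window = complete_matroid +
  fixes g :: "'a \<Rightarrow> 'a" and Y0 Y1 :: "'a set"
  assumes inj: "inj_on g Q" and g_fresh: "g ` Q \<inter> (S \<union> Q) = {}"
    and Y0_Y1: "Y0 \<subseteq> Y1" and Y1_Q: "Y1 \<subseteq> Q"
    and window: "\<And>m. m \<in> M \<Longrightarrow> \<exists>b\<in>M. b \<inter> S = m \<inter> S \<and> Y0 \<subseteq> b \<and> b \<inter> Q \<subseteq> Y1"
begin

definition P :: "'a set" where
  "P = g ` (Y1 - Y0)"

definition rename :: "'a \<Rightarrow> 'a" where
  "rename x = (if x \<in> Q then g x else x)"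

definition MSP :: "'a set set" where
  "MSP = (`) rename ` {b - Y0 | b. b \<in> M \<and> Y0 \<subseteq> b \<and> b \<subseteq> S \<union> Y1}"

definition MPQ :: "'a set set" where
  "MPQ = {u - g ` (Q - Y1) | u. u \<in> dual_link g \<and> g ` (Q - Y1) \<subseteq> u \<and> u \<subseteq> Q \<union> g ` (Q - Y0)}"

lemma P_disjoint: "P \<inter> S = {}" "P \<inter> Q = {}"
  unfolding P_def using g_fresh Y1_Q by blast+

lemma finite_P: "finite P"
  unfolding P_def using finite_Q Y1_Q by (simp add: finite_subset)

lemma card_P: "card P = card Y1 - card Y0"
proof -
  have "card P = card (Y1 - Y0)"
    unfolding P_def using inj Y1_Q by (intro card_image) (auto intro: inj_on_subset)
  also have "\<dots> = card Y1 - card Y0"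
    using Y0_Y1 Y1_Q finite_Q by (simp add: card_Diff_subset finite_subset)
  finally show ?thesis .
qed

lemma g_image_disjoint: "A \<subseteq> Q \<Longrightarrow> g ` A \<inter> (S \<union> Q) = {}"
  using g_fresh by blast

lemma g_image_eq_iff: "A \<subseteq> Q \<Longrightarrow> B \<subseteq> Q \<Longrightarrow> g ` A = g ` B \<longleftrightarrow> A = B"
  using inj by (rule inj_on_image_eq_iff)

lemma g_image_Int: "A \<subseteq> Q \<Longrightarrow> B \<subseteq> Q \<Longrightarrow> g ` A \<inter> g ` B = g ` (A \<inter> B)"
  using inj by (simp add: inj_on_image_Int)

lemma g_image_diff: "A \<subseteq> Q \<Longrightarrow> B \<subseteq> Q \<Longrightarrow> g ` A - g ` B = g ` (A - B)"
  by (rule inj_on_image_set_diff[OF inj, symmetric]) auto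

lemma g_image_subset_iff: "A \<subseteq> Q \<Longrightarrow> B \<subseteq> Q \<Longrightarrow> g ` A \<subseteq> g ` B \<longleftrightarrow> A \<subseteq> B"
  using inj by (rule inj_on_image_subset_iff)

lemma S_P_eq_iff:
  assumes "X \<subseteq> S" "X' \<subseteq> S" "D \<subseteq> Q" "D' \<subseteq> Q"
  shows "X \<union> g ` D = X' \<union> g ` D' \<longleftrightarrow> X = X' \<and> D = D'"
proof -
  have "g ` D \<inter> S = {}" "g ` D' \<inter> S = {}" using g_image_disjoint assms(3,4) by blast+
  then have "X \<union> g ` D = X' \<union> g ` D' \<longleftrightarrow> X = X' \<and> g ` D = g ` D'" using assms(1,2) by blast
  then show ?thesis using g_image_eq_iff[OF assms(3,4)] by simp
qed

lemma P_Q_eq_iff: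
  assumes "Y \<subseteq> Q" "Y' \<subseteq> Q" "D \<subseteq> Q" "D' \<subseteq> Q"
  shows "g ` D \<union> Y = g ` D' \<union> Y' \<longleftrightarrow> D = D' \<and> Y = Y'"
proof -
  have "g ` D \<inter> Q = {}" "g ` D' \<inter> Q = {}" using g_image_disjoint assms(3,4) by blast+
  then have "g ` D \<union> Y = g ` D' \<union> Y' \<longleftrightarrow> g ` D = g ` D' \<and> Y = Y'" using assms(1,2) by blast
  then show ?thesis using g_image_eq_iff[OF assms(3,4)] by simp
qed

lemma rename_image:
  assumes "X \<subseteq> S" "D \<subseteq> Q"
  shows "rename ` (X \<union> D) = X \<union> g ` D"
proof -
  have "rename x = x" if "x \<in> X" for x using that assms(1) disjoint by (auto simp: rename_def)
  then have "rename ` X = X" by simp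
  moreover have "rename ` D = g ` D" using assms(2) by (auto simp: rename_def)
  ultimately show ?thesis by (simp add: image_Un)
qed

lemma rename_inj: "inj_on rename (S \<union> Q)"
proof -
  have "inj_on rename S"
  proof (rule inj_onI)
    fix x y assume "x \<in> S" "y \<in> S" "rename x = rename y"
    moreover from this have "x \<notin> Q" "y \<notin> Q" using disjoint by blast+
    ultimately show "x = y" by (simp add: rename_def)
  qed
  moreover have "inj_on rename Q" using inj by (simp add: rename_def inj_on_def)
  moreover have "rename ` (S - Q) \<subseteq> S" "rename ` (Q - S) \<subseteq> g ` Q" by (auto simp: rename_def)
  then have "rename ` (S - Q) \<inter> rename ` (Q - S) = {}" using g_fresh by blast
  ultimately show ?thesis by (simp add: inj_on_Un)
qed

lemma MSP_eq: "MSP = {X \<union> g ` D | X D. X \<subseteq> S \<and> D \<subseteq> Y1 - Y0 \<and> X \<union> Y0 \<union> D \<in> M}"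
proof (rule set_eqI, rule iffI)
  fix a assume "a \<in> MSP"
  then obtain c where "c \<in> {b - Y0 | b. b \<in> M \<and> Y0 \<subseteq> b \<and> b \<subseteq> S \<union> Y1}" "a = rename ` c"
    unfolding MSP_def by (rule imageE)
  then obtain b where b: "b \<in> M" "Y0 \<subseteq> b" "b \<subseteq> S \<union> Y1" "a = rename ` (b - Y0)" by blast
  have "b - Y0 = (b \<inter> S) \<union> (b \<inter> Q - Y0)" using b(3) Y0_Y1 Y1_Q disjoint by blast
  moreover have "b \<inter> Q - Y0 \<subseteq> Y1 - Y0" using b(3) disjoint by blast
  moreover have "(b \<inter> S) \<union> Y0 \<union> (b \<inter> Q - Y0) = b" using b(2,3) Y1_Q by blast
  moreover have "a = (b \<inter> S) \<union> g ` (b \<inter> Q - Y0)"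
    using b(4) calculation(1) rename_image[of "b \<inter> S" "b \<inter> Q - Y0"] by auto
  ultimately show "a \<in> {X \<union> g ` D | X D. X \<subseteq> S \<and> D \<subseteq> Y1 - Y0 \<and> X \<union> Y0 \<union> D \<in> M}"
    unfolding mem_Collect_eq using b(1)
    by (intro exI[of _ "b \<inter> S"] exI[of _ "b \<inter> Q - Y0"]) simp
next
  fix a assume "a \<in> {X \<union> g ` D | X D. X \<subseteq> S \<and> D \<subseteq> Y1 - Y0 \<and> X \<union> Y0 \<union> D \<in> M}"
  then obtain X D where XD: "X \<subseteq> S" "D \<subseteq> Y1 - Y0" "X \<union> Y0 \<union> D \<in> M" "a = X \<union> g ` D" by blast
  then have "X \<union> Y0 \<union> D - Y0 = X \<union> D" "Y0 \<subseteq> X \<union> Y0 \<union> D" "X \<union> Y0 \<union> D \<subseteq> S \<union> Y1"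
    using Y0_Y1 Y1_Q disjoint by blast+
  moreover have "a = rename ` (X \<union> D)" using XD rename_image[of X D] Y1_Q by auto
  ultimately show "a \<in> MSP" unfolding MSP_def using XD(3) by blast
qed

lemma MSP_split:
  assumes "X \<subseteq> S" "D \<subseteq> Y1 - Y0"
  shows "X \<union> g ` D \<in> MSP \<longleftrightarrow> X \<union> Y0 \<union> D \<in> M"
proof
  assume "X \<union> g ` D \<in> MSP"
  then obtain X' D' where "X \<union> g ` D = X' \<union> g ` D'" "X' \<subseteq> S" "D' \<subseteq> Y1 - Y0" "X' \<union> Y0 \<union> D' \<in> M"
    unfolding MSP_eq by blast
  moreover from this have "X = X' \<and> D = D'" using S_P_eq_iff[of X X' D D'] assms Y1_Q by blast
  ultimately show "X \<union> Y0 \<union> D \<in> M" by simp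
next
  assume "X \<union> Y0 \<union> D \<in> M"
  with assms show "X \<union> g ` D \<in> MSP" unfolding MSP_eq by blast
qed

lemma dual_link_base_in_window:
  assumes "Y \<subseteq> Q" "Y' \<subseteq> Q"
  shows "g ` (Q - Y1) \<subseteq> Y' \<union> g ` (Q - Y) \<and> Y' \<union> g ` (Q - Y) \<subseteq> Q \<union> g ` (Q - Y0)
    \<longleftrightarrow> Y0 \<subseteq> Y \<and> Y \<subseteq> Y1"
proof -
  have "g ` (Q - Y1) \<inter> Y' = {}" using assms(2) g_image_disjoint[of "Q - Y1"] by blast
  then have "g ` (Q - Y1) \<subseteq> Y' \<union> g ` (Q - Y) \<longleftrightarrow> g ` (Q - Y1) \<subseteq> g ` (Q - Y)" by blast
  moreover have "g ` (Q - Y) \<inter> Q = {}" using g_image_disjoint[of "Q - Y"] by blast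
  then have "Y' \<union> g ` (Q - Y) \<subseteq> Q \<union> g ` (Q - Y0) \<longleftrightarrow> g ` (Q - Y) \<subseteq> g ` (Q - Y0)"
    using assms(2) by blast
  moreover have "Q - Y1 \<subseteq> Q - Y \<longleftrightarrow> Y \<subseteq> Y1" using assms(1) by blast
  then have "g ` (Q - Y1) \<subseteq> g ` (Q - Y) \<longleftrightarrow> Y \<subseteq> Y1"
    using g_image_subset_iff[of "Q - Y1" "Q - Y"] by blast
  moreover have "Q - Y \<subseteq> Q - Y0 \<longleftrightarrow> Y0 \<subseteq> Y" using Y0_Y1 Y1_Q by blast
  then have "g ` (Q - Y) \<subseteq> g ` (Q - Y0) \<longleftrightarrow> Y0 \<subseteq> Y"
    using g_image_subset_iff[of "Q - Y" "Q - Y0"] by blast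
  ultimately show ?thesis by blast
qed

lemma dual_link_base_contract:
  assumes "Y' \<subseteq> Q"
  shows "Y' \<union> g ` (Q - Y) - g ` (Q - Y1) = g ` (Y1 - Y) \<union> Y'"
proof -
  have "g ` (Q - Y) - g ` (Q - Y1) = g ` ((Q - Y) - (Q - Y1))" by (rule g_image_diff) auto
  moreover have "(Q - Y) - (Q - Y1) = Y1 - Y" using Y1_Q by blast
  moreover have "Y' \<inter> g ` (Q - Y1) = {}" using assms g_image_disjoint[of "Q - Y1"] by blast
  ultimately show ?thesis by blast
qed

lemma MPQ_eq: "MPQ = {g ` (Y1 - Y) \<union> Y' | Y Y'. Q_equiv Y Y' \<and> Y0 \<subseteq> Y \<and> Y \<subseteq> Y1}"
proof (rule set_eqI, rule iffI)
  fix z assume "z \<in> MPQ"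
  then obtain u where u: "u \<in> dual_link g" "g ` (Q - Y1) \<subseteq> u" "u \<subseteq> Q \<union> g ` (Q - Y0)"
    "z = u - g ` (Q - Y1)" unfolding MPQ_def by blast
  then obtain Y Y' where Y: "Q_equiv Y Y'" "u = Y' \<union> g ` (Q - Y)" unfolding dual_link_eq by blast
  then have Q: "Y \<subseteq> Q" "Y' \<subseteq> Q" unfolding Q_equiv_def by blast+
  from u(2,3) have "g ` (Q - Y1) \<subseteq> Y' \<union> g ` (Q - Y) \<and> Y' \<union> g ` (Q - Y) \<subseteq> Q \<union> g ` (Q - Y0)"
    unfolding Y(2) by (rule conjI)
  then have "Y0 \<subseteq> Y \<and> Y \<subseteq> Y1" by (rule iffD1[OF dual_link_base_in_window[OF Q]])
  moreover have "z = g ` (Y1 - Y) \<union> Y'" using u(4) Y(2) dual_link_base_contract[OF Q(2)] by simp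
  ultimately show "z \<in> {g ` (Y1 - Y) \<union> Y' | Y Y'. Q_equiv Y Y' \<and> Y0 \<subseteq> Y \<and> Y \<subseteq> Y1}"
    using Y(1) by blast
next
  fix z assume "z \<in> {g ` (Y1 - Y) \<union> Y' | Y Y'. Q_equiv Y Y' \<and> Y0 \<subseteq> Y \<and> Y \<subseteq> Y1}"
  then obtain Y Y' where Y: "Q_equiv Y Y'" "Y0 \<subseteq> Y" "Y \<subseteq> Y1" "z = g ` (Y1 - Y) \<union> Y'" by blast
  then have Q: "Y \<subseteq> Q" "Y' \<subseteq> Q" unfolding Q_equiv_def by blast+
  have "Y' \<union> g ` (Q - Y) \<in> dual_link g" unfolding dual_link_eq using Y(1) by blast
  moreover have "g ` (Q - Y1) \<subseteq> Y' \<union> g ` (Q - Y) \<and> Y' \<union> g ` (Q - Y) \<subseteq> Q \<union> g ` (Q - Y0)"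
    using Y(2,3) by (intro iffD2[OF dual_link_base_in_window[OF Q]] conjI)
  moreover have "z = Y' \<union> g ` (Q - Y) - g ` (Q - Y1)" using Y(4) dual_link_base_contract[OF Q(2)] by simp
  ultimately show "z \<in> MPQ" unfolding MPQ_def by blast
qed

lemma MPQ_split:
  assumes "D \<subseteq> Y1 - Y0" "Y \<subseteq> Q"
  shows "g ` D \<union> Y \<in> MPQ \<longleftrightarrow> Q_equiv (Y1 - D) Y"
proof
  assume "g ` D \<union> Y \<in> MPQ"
  then obtain Y2 Y' where Y2: "Q_equiv Y2 Y'" "Y0 \<subseteq> Y2" "Y2 \<subseteq> Y1" "g ` D \<union> Y = g ` (Y1 - Y2) \<union> Y'"
    unfolding MPQ_eq by blast
  moreover from this have "Y' \<subseteq> Q" unfolding Q_equiv_def by blast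
  moreover have "D \<subseteq> Q" "Y1 - Y2 \<subseteq> Q" using assms(1) Y1_Q by blast+
  ultimately have "D = Y1 - Y2" "Y = Y'" using P_Q_eq_iff[of Y Y' D "Y1 - Y2"] assms(2) by simp_all
  moreover have "Y1 - (Y1 - Y2) = Y2" using Y2(3) by blast
  ultimately show "Q_equiv (Y1 - D) Y" using Y2(1) by simp
next
  assume "Q_equiv (Y1 - D) Y"
  moreover have "Y0 \<subseteq> Y1 - D" "Y1 - D \<subseteq> Y1" "Y1 - (Y1 - D) = D" using assms(1) Y0_Y1 by blast+
  ultimately show "g ` D \<union> Y \<in> MPQ"
    unfolding MPQ_eq mem_Collect_eq by (intro exI[of _ "Y1 - D"] exI[of _ Y]) simp
qed

lemma subset_P_cases:
  assumes "Z \<subseteq> P"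
  obtains D where "D \<subseteq> Y1 - Y0" "Z = g ` D"
  using assms unfolding P_def subset_image_iff by blast

lemma exists_window_base: "\<exists>b\<in>M. Y0 \<subseteq> b \<and> b \<subseteq> S \<union> Y1"
proof -
  obtain m where "m \<in> M" using matroid_bases_nonempty[OF is_matroid] by blast
  then obtain b where "b \<in> M" "Y0 \<subseteq> b" "b \<inter> Q \<subseteq> Y1" using window by blast
  moreover from this have "b \<subseteq> S \<union> Y1" using base_subset by blast
  ultimately show ?thesis by blast
qed

lemma S_part_in_window:
  assumes "X \<subseteq> S" "Y \<subseteq> Q" "X \<union> Y \<in> M"
  shows "\<exists>D\<subseteq>Y1 - Y0. X \<union> Y0 \<union> D \<in> M \<and> Q_equiv (Y0 \<union> D) Y"
proof -
  obtain b where b: "b \<in> M" "b \<inter> S = (X \<union> Y) \<inter> S" "Y0 \<subseteq> b" "b \<inter> Q \<subseteq> Y1"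
    using window[OF assms(3)] by blast
  have "b \<inter> S = X" using b(2) assms(1,2) disjoint by blast
  then have "X \<union> Y0 \<union> (b \<inter> Q - Y0) = b" using b(3) base_split[OF b(1)] Y0_Y1 Y1_Q by blast
  moreover have "Y0 \<union> (b \<inter> Q - Y0) \<subseteq> Q" "b \<inter> Q - Y0 \<subseteq> Y1 - Y0" using b(4) Y0_Y1 Y1_Q by blast+
  ultimately show ?thesis unfolding Q_equiv_def using b(1) assms by (metis Un_assoc)
qed

lemma MSP_matroid: "matroid (S \<union> P) MSP"
proof -
  have "matroid (S \<union> Y1 - Y0) {b - Y0 | b. b \<in> M \<and> Y0 \<subseteq> b \<and> b \<subseteq> S \<union> Y1}"
    using matroid_minor[OF is_matroid _ exists_window_base] Y1_Q by blast
  moreover have "inj_on rename (S \<union> Y1 - Y0)"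
    by (rule inj_on_subset[OF rename_inj]) (use Y1_Q in blast)
  ultimately have "matroid (rename ` (S \<union> Y1 - Y0)) MSP" unfolding MSP_def by (rule matroid_image)
  moreover have "rename ` (S \<union> Y1 - Y0) = S \<union> P"
  proof -
    have "S \<union> Y1 - Y0 = S \<union> (Y1 - Y0)" using Y0_Y1 Y1_Q disjoint by blast
    then show ?thesis unfolding P_def using rename_image[of S "Y1 - Y0"] Y1_Q by auto
  qed
  ultimately show ?thesis by simp
qed

lemma MPQ_matroid: "matroid (P \<union> Q) MPQ"
proof -
  have "g ` Q \<inter> Q = {}" using g_fresh by blast
  note N = dual_link_matroid[OF inj this]
  obtain b where b: "b \<in> M" "Y0 \<subseteq> b" "b \<subseteq> S \<union> Y1" using exists_window_base by blast
  then have "Y0 \<subseteq> b \<inter> Q" "b \<inter> Q \<subseteq> Y1" "b \<inter> Q \<subseteq> Q" using Y0_Y1 Y1_Q disjoint by blast+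
  moreover have "(b \<inter> Q) \<union> g ` (Q - b \<inter> Q) \<in> dual_link g"
    unfolding dual_link_eq using Q_equiv_bases[OF b(1) b(1)] by blast
  ultimately have "\<exists>u\<in>dual_link g. g ` (Q - Y1) \<subseteq> u \<and> u \<subseteq> Q \<union> g ` (Q - Y0)"
    using dual_link_base_in_window[of "b \<inter> Q" "b \<inter> Q"] by blast
  then have "matroid (Q \<union> g ` (Q - Y0) - g ` (Q - Y1)) MPQ"
    unfolding MPQ_def by (intro matroid_minor[OF N]) blast+
  moreover have "Q \<union> g ` (Q - Y0) - g ` (Q - Y1) = P \<union> Q"
  proof -
    have "g ` (Q - Y0) - g ` (Q - Y1) = g ` ((Q - Y0) - (Q - Y1))" by (rule g_image_diff) auto
    moreover have "(Q - Y0) - (Q - Y1) = Y1 - Y0" using Y1_Q by blast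
    moreover have "g ` (Q - Y1) \<inter> Q = {}" using g_image_disjoint[of "Q - Y1"] by blast
    ultimately show ?thesis unfolding P_def by blast
  qed
  ultimately show ?thesis by simp
qed

lemma complementary_pair_iff:
  assumes "X \<subseteq> S" "D \<subseteq> Y1 - Y0" "Y0 \<subseteq> Y" "Y \<subseteq> Y1" "Y' \<subseteq> Q"
  shows "(X \<union> g ` D) \<inter> (g ` (Y1 - Y) \<union> Y') = {} \<and> P \<subseteq> (X \<union> g ` D) \<union> (g ` (Y1 - Y) \<union> Y')
    \<longleftrightarrow> Y0 \<union> D = Y"
proof -
  have QD: "D \<subseteq> Q" "Y1 - Y \<subseteq> Q" "Y1 - Y0 \<subseteq> Q" using assms(2) Y1_Q by blast+
  have disj: "g ` D \<inter> (S \<union> Q) = {}" "g ` (Y1 - Y) \<inter> (S \<union> Q) = {}"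
    using g_image_disjoint QD by blast+
  have "(X \<union> g ` D) \<inter> (g ` (Y1 - Y) \<union> Y') = g ` D \<inter> g ` (Y1 - Y)"
    using disj assms(1,5) disjoint by blast
  also have "\<dots> = g ` (D \<inter> (Y1 - Y))" using g_image_Int QD by blast
  finally have "(X \<union> g ` D) \<inter> (g ` (Y1 - Y) \<union> Y') = {} \<longleftrightarrow> D \<inter> (Y1 - Y) = {}" by simp
  moreover have "P \<subseteq> (X \<union> g ` D) \<union> (g ` (Y1 - Y) \<union> Y') \<longleftrightarrow> P \<subseteq> g ` D \<union> g ` (Y1 - Y)"
    using assms(1,5) P_disjoint by blast
  moreover have "P \<subseteq> g ` D \<union> g ` (Y1 - Y) \<longleftrightarrow> Y1 - Y0 \<subseteq> D \<union> (Y1 - Y)"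
    unfolding P_def image_Un[symmetric] using g_image_subset_iff[of "Y1 - Y0" "D \<union> (Y1 - Y)"] QD
    by blast
  moreover have "D \<inter> (Y1 - Y) = {} \<and> Y1 - Y0 \<subseteq> D \<union> (Y1 - Y) \<longleftrightarrow> Y0 \<union> D = Y"
    using assms(2-4) by blast
  ultimately show ?thesis by (simp only:)
qed

lemma MSP_partner:
  assumes "z \<in> MPQ"
  shows "\<exists>a\<in>MSP. a \<inter> P = P - z"
proof -
  obtain Y Y' X where Y: "Y0 \<subseteq> Y" "Y \<subseteq> Y1" "z = g ` (Y1 - Y) \<union> Y'" "Y' \<subseteq> Q"
    and X: "X \<subseteq> S" "X \<union> Y \<in> M" using assms unfolding MPQ_eq Q_equiv_def by blast
  have "X \<union> Y0 \<union> (Y - Y0) = X \<union> Y" "Y - Y0 \<subseteq> Y1 - Y0" using Y(1,2) by blast+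
  then have a: "X \<union> g ` (Y - Y0) \<in> MSP" using MSP_split[OF X(1), of "Y - Y0"] X(2) by simp
  have "g ` (Y1 - Y0) \<inter> Y' = {}" using Y(4) g_image_disjoint[of "Y1 - Y0"] Y1_Q by blast
  then have "P - z = g ` (Y1 - Y0) - g ` (Y1 - Y)" unfolding P_def Y(3) by blast
  also have "\<dots> = g ` ((Y1 - Y0) - (Y1 - Y))" using Y1_Q by (intro g_image_diff) auto
  also have "(Y1 - Y0) - (Y1 - Y) = Y - Y0" using Y(2) by blast
  finally have "P - z = g ` (Y - Y0)" .
  moreover have "X \<inter> P = {}" "g ` (Y - Y0) \<subseteq> P" using X(1) P_disjoint Y(2) unfolding P_def by blast+
  ultimately have "(X \<union> g ` (Y - Y0)) \<inter> P = P - z" by blast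
  with a show ?thesis by blast
qed

lemma outer_parts_of_pair:
  assumes "X \<subseteq> S" "D \<subseteq> Q" "Y' \<subseteq> Q"
  shows "((X \<union> g ` D) \<inter> S) \<union> ((g ` (Y1 - Y) \<union> Y') \<inter> Q) = X \<union> Y'"
proof -
  have "Y1 - Y \<subseteq> Q" using Y1_Q by blast
  with assms show ?thesis using g_image_disjoint[OF assms(2)] g_image_disjoint[OF \<open>Y1 - Y \<subseteq> Q\<close>] by blast
qed

lemma complementary_pair_base:
  assumes "a \<in> MSP" "z \<in> MPQ" "a \<inter> z = {}" "P \<subseteq> a \<union> z"
  shows "(a \<inter> S) \<union> (z \<inter> Q) \<in> M"
proof -
  obtain X D where XD: "X \<subseteq> S" "D \<subseteq> Y1 - Y0" "X \<union> Y0 \<union> D \<in> M" "a = X \<union> g ` D"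
    using assms(1) unfolding MSP_eq by blast
  obtain Y Y' where Y: "Q_equiv Y Y'" "Y0 \<subseteq> Y" "Y \<subseteq> Y1" "z = g ` (Y1 - Y) \<union> Y'"
    using assms(2) unfolding MPQ_eq by blast
  have "Y' \<subseteq> Q" using Y(1) unfolding Q_equiv_def by blast
  have "Y0 \<union> D = Y"
    using complementary_pair_iff[OF XD(1,2) Y(2,3) \<open>Y' \<subseteq> Q\<close>] assms(3,4) unfolding XD(4) Y(4) by blast
  then have "X \<union> Y \<in> M" using XD(3) by (simp add: Un_assoc)
  then have "X \<union> Y' \<in> M" using Q_equiv_swap[OF Y(1) XD(1)] by blast
  moreover have "D \<subseteq> Q" using XD(2) Y1_Q by blast
  ultimately show ?thesis using outer_parts_of_pair[OF XD(1) _ \<open>Y' \<subseteq> Q\<close>, of D Y] unfolding XD(4) Y(4) by simp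
qed

lemma base_complementary_pair:
  assumes m: "m \<in> M"
  shows "\<exists>a z. a \<in> MSP \<and> z \<in> MPQ \<and> a \<inter> z = {} \<and> P \<subseteq> a \<union> z \<and> m = (a \<inter> S) \<union> (z \<inter> Q)"
proof -
  obtain D where D: "D \<subseteq> Y1 - Y0" "(m \<inter> S) \<union> Y0 \<union> D \<in> M" "Q_equiv (Y0 \<union> D) (m \<inter> Q)"
    using S_part_in_window[of "m \<inter> S" "m \<inter> Q"] base_split[OF m] m by auto
  have Y: "Y0 \<subseteq> Y0 \<union> D" "Y0 \<union> D \<subseteq> Y1" "D \<subseteq> Q" using D(1) Y0_Y1 Y1_Q by blast+
  define a where "a = (m \<inter> S) \<union> g ` D"
  define z where "z = g ` (Y1 - (Y0 \<union> D)) \<union> (m \<inter> Q)"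
  have "a \<in> MSP" unfolding a_def using MSP_split[of "m \<inter> S" D] D(1,2) by blast
  moreover have "z \<in> MPQ" unfolding z_def MPQ_eq using D(3) Y by blast
  moreover have "a \<inter> z = {} \<and> P \<subseteq> a \<union> z"
    unfolding a_def z_def using complementary_pair_iff[of "m \<inter> S" D "Y0 \<union> D" "m \<inter> Q"] D(1) Y by blast
  moreover have "m = (a \<inter> S) \<union> (z \<inter> Q)"
    using outer_parts_of_pair[OF _ Y(3), of "m \<inter> S" "m \<inter> Q" "Y0 \<union> D"] base_split[OF m]
    unfolding a_def z_def by blast
  ultimately have "a \<in> MSP \<and> z \<in> MPQ \<and> a \<inter> z = {} \<and> P \<subseteq> a \<union> z \<and> m = (a \<inter> S) \<union> (z \<inter> Q)"
    by blast
  then show ?thesis by blast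
qed

lemma linkb_window: "linkb (S \<union> P) MSP (P \<union> Q) MPQ = M"
proof -
  have "linkb (S \<union> P) MSP (P \<union> Q) MPQ =
    {(a \<inter> S) \<union> (z \<inter> Q) | a z. a \<in> MSP \<and> z \<in> MPQ \<and> a \<inter> z = {} \<and> P \<subseteq> a \<union> z}"
  proof (rule linkb_eq_split_middle)
    show "finite P" by (fact finite_P)
    show "finite Q" by (fact finite_Q)
    show "S \<inter> P = {}" "P \<inter> Q = {}" "S \<inter> Q = {}" using P_disjoint disjoint by blast+
    show "matroid (S \<union> P) MSP" by (fact MSP_matroid)
    show "z \<subseteq> P \<union> Q" if "z \<in> MPQ" for z using MPQ_matroid that by (rule matroid_base_subset)
    show "card z = card z'" if "z \<in> MPQ" "z' \<in> MPQ" for z z'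
      using MPQ_matroid that by (rule matroid_bases_card_eq)
    show "\<exists>a\<in>MSP. a \<inter> P = P - z" if "z \<in> MPQ" for z using that by (rule MSP_partner)
  qed
  also have "\<dots> = M"
  proof (rule set_eqI, rule iffI)
    fix m assume "m \<in> {(a \<inter> S) \<union> (z \<inter> Q) | a z. a \<in> MSP \<and> z \<in> MPQ \<and> a \<inter> z = {} \<and> P \<subseteq> a \<union> z}"
    then obtain a z where "a \<in> MSP" "z \<in> MPQ" "a \<inter> z = {}" "P \<subseteq> a \<union> z" "m = (a \<inter> S) \<union> (z \<inter> Q)"
      by blast
    then show "m \<in> M" using complementary_pair_base by simp
  next
    fix m assume "m \<in> M"
    from base_complementary_pair[OF this]
    show "m \<in> {(a \<inter> S) \<union> (z \<inter> Q) | a z. a \<in> MSP \<and> z \<in> MPQ \<and> a \<inter> z = {} \<and> P \<subseteq> a \<union> z}"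
      by blast
  qed
  finally show ?thesis .
qed

lemma MSP_complete: "complete S P MSP"
  unfolding complete_def
proof (intro allI impI, elim conjE)
  fix X X' Z Z' assume X: "X \<subseteq> S" "X' \<subseteq> S" and "Z \<subseteq> P" "Z' \<subseteq> P"
    and M: "X \<union> Z \<in> MSP" "X \<union> Z' \<in> MSP" "X' \<union> Z \<in> MSP"
  obtain D where D: "D \<subseteq> Y1 - Y0" "Z = g ` D" using \<open>Z \<subseteq> P\<close> by (rule subset_P_cases)
  obtain D' where D': "D' \<subseteq> Y1 - Y0" "Z' = g ` D'" using \<open>Z' \<subseteq> P\<close> by (rule subset_P_cases)
  have Q: "Y0 \<union> D \<subseteq> Q" "Y0 \<union> D' \<subseteq> Q" using D(1) D'(1) Y0_Y1 Y1_Q by blast+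
  from M have "X \<union> (Y0 \<union> D) \<in> M" "X \<union> (Y0 \<union> D') \<in> M" "X' \<union> (Y0 \<union> D) \<in> M"
    unfolding D(2) D'(2) using MSP_split X D(1) D'(1) by (simp_all add: Un_assoc)
  then have "X' \<union> (Y0 \<union> D') \<in> M" using complete_swap[OF X Q] by blast
  then show "X' \<union> Z' \<in> MSP" unfolding D'(2) using MSP_split X(2) D'(1) by (simp add: Un_assoc)
qed

lemma MPQ_complete: "complete P Q MPQ"
  unfolding complete_def
proof (intro allI impI, elim conjE)
  fix Z Z' Y Y' assume "Z \<subseteq> P" "Z' \<subseteq> P" and Y: "Y \<subseteq> Q" "Y' \<subseteq> Q"
    and M: "Z \<union> Y \<in> MPQ" "Z \<union> Y' \<in> MPQ" "Z' \<union> Y \<in> MPQ"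
  obtain D where D: "D \<subseteq> Y1 - Y0" "Z = g ` D" using \<open>Z \<subseteq> P\<close> by (rule subset_P_cases)
  obtain D' where D': "D' \<subseteq> Y1 - Y0" "Z' = g ` D'" using \<open>Z' \<subseteq> P\<close> by (rule subset_P_cases)
  from M have "Q_equiv (Y1 - D) Y" "Q_equiv (Y1 - D) Y'" "Q_equiv (Y1 - D') Y"
    unfolding D(2) D'(2) using MPQ_split D(1) D'(1) Y by simp_all
  then have "Q_equiv (Y1 - D') Y'" using Q_equiv_sym Q_equiv_trans by blast
  then show "Z' \<union> Y' \<in> MPQ" unfolding D'(2) using MPQ_split D'(1) Y(2) by simp
qed

lemma blocks_S: "blocks S Q M = blocks S P MSP"
proof (rule blocks_eqI)
  fix X X' assume X: "X \<subseteq> S" "X' \<subseteq> S"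
  show "(\<exists>Y\<subseteq>Q. X \<union> Y \<in> M \<and> X' \<union> Y \<in> M) \<longleftrightarrow> (\<exists>Z\<subseteq>P. X \<union> Z \<in> MSP \<and> X' \<union> Z \<in> MSP)"
  proof
    assume "\<exists>Y\<subseteq>Q. X \<union> Y \<in> M \<and> X' \<union> Y \<in> M"
    then obtain Y where Y: "Y \<subseteq> Q" "X \<union> Y \<in> M" "X' \<union> Y \<in> M" by blast
    obtain D where D: "D \<subseteq> Y1 - Y0" "X \<union> (Y0 \<union> D) \<in> M"
      using S_part_in_window[OF X(1) Y(1,2)] by (auto simp: Un_assoc)
    have "Y0 \<union> D \<subseteq> Q" using D(1) Y0_Y1 Y1_Q by blast
    then have "X' \<union> (Y0 \<union> D) \<in> M" using complete_swap[OF X Y(1)] Y(2,3) D(2) by blast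
    with D have "X \<union> g ` D \<in> MSP" "X' \<union> g ` D \<in> MSP" using MSP_split X by (simp_all add: Un_assoc)
    moreover have "g ` D \<subseteq> P" unfolding P_def using D(1) by blast
    ultimately show "\<exists>Z\<subseteq>P. X \<union> Z \<in> MSP \<and> X' \<union> Z \<in> MSP" by blast
  next
    assume "\<exists>Z\<subseteq>P. X \<union> Z \<in> MSP \<and> X' \<union> Z \<in> MSP"
    then obtain Z where Z: "Z \<subseteq> P" "X \<union> Z \<in> MSP" "X' \<union> Z \<in> MSP" by blast
    obtain D where D: "D \<subseteq> Y1 - Y0" "Z = g ` D" using Z(1) by (rule subset_P_cases)
    have "X \<union> (Y0 \<union> D) \<in> M" "X' \<union> (Y0 \<union> D) \<in> M"
      using Z(2,3) MSP_split X D by (simp_all add: Un_assoc)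
    moreover have "Y0 \<union> D \<subseteq> Q" using D(1) Y0_Y1 Y1_Q by blast
    ultimately show "\<exists>Y\<subseteq>Q. X \<union> Y \<in> M \<and> X' \<union> Y \<in> M" by blast
  qed
qed

lemma Q_equiv_window_iff:
  assumes "Y \<subseteq> Q" "Y' \<subseteq> Q"
  shows "(\<exists>D\<subseteq>Y1 - Y0. Q_equiv (Y1 - D) Y \<and> Q_equiv (Y1 - D) Y') \<longleftrightarrow> Q_equiv Y Y'"
proof
  assume "\<exists>D\<subseteq>Y1 - Y0. Q_equiv (Y1 - D) Y \<and> Q_equiv (Y1 - D) Y'"
  then show "Q_equiv Y Y'" using Q_equiv_sym Q_equiv_trans by blast
next
  assume "Q_equiv Y Y'"
  then obtain X where X: "X \<subseteq> S" "X \<union> Y \<in> M" unfolding Q_equiv_def by blast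
  obtain D where D: "D \<subseteq> Y1 - Y0" "Q_equiv (Y0 \<union> D) Y" using S_part_in_window[OF X(1) assms(1) X(2)] by blast
  have "Y1 - (Y1 - Y0 - D) = Y0 \<union> D" using D(1) Y0_Y1 by blast
  with D(2) \<open>Q_equiv Y Y'\<close> have "Q_equiv (Y1 - (Y1 - Y0 - D)) Y \<and> Q_equiv (Y1 - (Y1 - Y0 - D)) Y'"
    using Q_equiv_trans by simp
  then show "\<exists>D\<subseteq>Y1 - Y0. Q_equiv (Y1 - D) Y \<and> Q_equiv (Y1 - D) Y'"
    by (intro exI[of _ "Y1 - Y0 - D"]) blast
qed

lemma ex_MPQ_pair_iff:
  assumes "Y \<subseteq> Q" "Y' \<subseteq> Q"
  shows "(\<exists>Z\<subseteq>P. Y \<union> Z \<in> MPQ \<and> Y' \<union> Z \<in> MPQ) \<longleftrightarrow>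
    (\<exists>D\<subseteq>Y1 - Y0. Q_equiv (Y1 - D) Y \<and> Q_equiv (Y1 - D) Y')"
proof
  assume "\<exists>Z\<subseteq>P. Y \<union> Z \<in> MPQ \<and> Y' \<union> Z \<in> MPQ"
  then obtain Z where Z: "Z \<subseteq> P" "Z \<union> Y \<in> MPQ" "Z \<union> Y' \<in> MPQ" by (auto simp: Un_commute)
  obtain D where D: "D \<subseteq> Y1 - Y0" "Z = g ` D" using Z(1) by (rule subset_P_cases)
  with Z(2,3) show "\<exists>D\<subseteq>Y1 - Y0. Q_equiv (Y1 - D) Y \<and> Q_equiv (Y1 - D) Y'"
    using MPQ_split assms by blast
next
  assume "\<exists>D\<subseteq>Y1 - Y0. Q_equiv (Y1 - D) Y \<and> Q_equiv (Y1 - D) Y'"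
  then obtain D where D: "D \<subseteq> Y1 - Y0" "Q_equiv (Y1 - D) Y" "Q_equiv (Y1 - D) Y'" by blast
  then have "g ` D \<union> Y \<in> MPQ" "g ` D \<union> Y' \<in> MPQ" using MPQ_split assms by blast+
  moreover have "g ` D \<subseteq> P" unfolding P_def using D(1) by blast
  ultimately show "\<exists>Z\<subseteq>P. Y \<union> Z \<in> MPQ \<and> Y' \<union> Z \<in> MPQ" by (auto simp: Un_commute)
qed

lemma blocks_Q: "blocks Q S M = blocks Q P MPQ"
proof (rule blocks_eqI)
  fix Y Y' assume Y: "Y \<subseteq> Q" "Y' \<subseteq> Q"
  have "(\<exists>X\<subseteq>S. Y \<union> X \<in> M \<and> Y' \<union> X \<in> M) \<longleftrightarrow> Q_equiv Y Y'"
    unfolding Q_equiv_def using Y by (auto simp: Un_commute)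
  then show "(\<exists>X\<subseteq>S. Y \<union> X \<in> M \<and> Y' \<union> X \<in> M) \<longleftrightarrow> (\<exists>Z\<subseteq>P. Y \<union> Z \<in> MPQ \<and> Y' \<union> Z \<in> MPQ)"
    using ex_MPQ_pair_iff[OF Y] Q_equiv_window_iff[OF Y] by simp
qed

lemma dual_MSP_split:
  assumes D: "D \<subseteq> Y1 - Y0" and W: "W \<subseteq> S"
  shows "g ` D \<union> W \<in> dualb (S \<union> P) MSP \<longleftrightarrow> (S - W) \<union> (Y1 - D) \<in> M"
proof -
  have "g ` D \<subseteq> P" unfolding P_def using D by blast
  then have "g ` D \<union> W \<in> dualb (S \<union> P) MSP \<longleftrightarrow> (S \<union> P) - (g ` D \<union> W) \<in> MSP"
    using W MSP_matroid by (intro dualb_mem_iff) (auto dest: matroid_base_subset)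
  also have "(S \<union> P) - (g ` D \<union> W) = (S - W) \<union> g ` (Y1 - Y0 - D)"
  proof -
    have "P - g ` D = g ` (Y1 - Y0 - D)" unfolding P_def using D Y1_Q by (intro g_image_diff) auto
    then show ?thesis using P_disjoint(1) \<open>g ` D \<subseteq> P\<close> W by blast
  qed
  also have "\<dots> \<in> MSP \<longleftrightarrow> (S - W) \<union> Y0 \<union> (Y1 - Y0 - D) \<in> M" by (rule MSP_split) auto
  also have "(S - W) \<union> Y0 \<union> (Y1 - Y0 - D) = (S - W) \<union> (Y1 - D)" using D Y0_Y1 by blast
  finally show ?thesis .
qed

lemma ex_dual_MSP_pair_iff:
  assumes "D \<subseteq> Y1 - Y0" "D' \<subseteq> Y1 - Y0"
  shows "(\<exists>W\<subseteq>S. g ` D \<union> W \<in> dualb (S \<union> P) MSP \<and> g ` D' \<union> W \<in> dualb (S \<union> P) MSP)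
    \<longleftrightarrow> Q_equiv (Y1 - D) (Y1 - D')"
proof
  assume "\<exists>W\<subseteq>S. g ` D \<union> W \<in> dualb (S \<union> P) MSP \<and> g ` D' \<union> W \<in> dualb (S \<union> P) MSP"
  then obtain W where "W \<subseteq> S" "(S - W) \<union> (Y1 - D) \<in> M" "(S - W) \<union> (Y1 - D') \<in> M"
    using dual_MSP_split assms by blast
  then show "Q_equiv (Y1 - D) (Y1 - D')" unfolding Q_equiv_def using Y1_Q by blast
next
  assume "Q_equiv (Y1 - D) (Y1 - D')"
  then obtain X where X: "X \<subseteq> S" "X \<union> (Y1 - D) \<in> M" "X \<union> (Y1 - D') \<in> M"
    unfolding Q_equiv_def by blast
  moreover have "S - (S - X) = X" using X(1) by blast
  ultimately have "g ` D \<union> (S - X) \<in> dualb (S \<union> P) MSP" "g ` D' \<union> (S - X) \<in> dualb (S \<union> P) MSP"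
    using dual_MSP_split[OF _ Diff_subset] assms by simp_all
  then show "\<exists>W\<subseteq>S. g ` D \<union> W \<in> dualb (S \<union> P) MSP \<and> g ` D' \<union> W \<in> dualb (S \<union> P) MSP"
    by blast
qed

lemma blocks_P: "blocks P S (dualb (S \<union> P) MSP) = blocks P Q MPQ"
proof (rule blocks_eqI)
  fix Z Z' assume "Z \<subseteq> P" "Z' \<subseteq> P"
  then obtain D D' where D: "D \<subseteq> Y1 - Y0" "Z = g ` D" and D': "D' \<subseteq> Y1 - Y0" "Z' = g ` D'"
    by (meson subset_P_cases)
  have Q: "Y1 - D \<subseteq> Q" "Y1 - D' \<subseteq> Q" using Y1_Q by blast+
  have "(\<exists>Y\<subseteq>Q. g ` D \<union> Y \<in> MPQ \<and> g ` D' \<union> Y \<in> MPQ) \<longleftrightarrow> Q_equiv (Y1 - D) (Y1 - D')"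
  proof
    assume "\<exists>Y\<subseteq>Q. g ` D \<union> Y \<in> MPQ \<and> g ` D' \<union> Y \<in> MPQ"
    then obtain Y where "Y \<subseteq> Q" "Q_equiv (Y1 - D) Y" "Q_equiv (Y1 - D') Y" using MPQ_split D(1) D'(1) by blast
    then show "Q_equiv (Y1 - D) (Y1 - D')" using Q_equiv_sym Q_equiv_trans by blast
  next
    assume "Q_equiv (Y1 - D) (Y1 - D')"
    moreover from this have "Q_equiv (Y1 - D') (Y1 - D')" using Q_equiv_sym Q_equiv_trans by blast
    ultimately show "\<exists>Y\<subseteq>Q. g ` D \<union> Y \<in> MPQ \<and> g ` D' \<union> Y \<in> MPQ"
      using MPQ_split[OF D(1) Q(2)] MPQ_split[OF D'(1) Q(2)] Q(2) by blast
  qed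
  then show "(\<exists>W\<subseteq>S. Z \<union> W \<in> dualb (S \<union> P) MSP \<and> Z' \<union> W \<in> dualb (S \<union> P) MSP) \<longleftrightarrow>
      (\<exists>Y\<subseteq>Q. Z \<union> Y \<in> MPQ \<and> Z' \<union> Y \<in> MPQ)"
    unfolding D(2) D'(2) using ex_dual_MSP_pair_iff[OF D(1) D'(1)] by simp
qed

lemma P_in_base_and_cobase:
  assumes m0: "m0 \<in> M" "m0 \<inter> Q = Y0" and b1: "b1 \<in> M" "b1 \<inter> Q = Y1"
  shows "(\<exists>b\<in>MSP. P \<subseteq> b) \<and> (\<exists>c\<in>dualb (S \<union> P) MSP. P \<subseteq> c)
    \<and> (\<exists>b\<in>MPQ. P \<subseteq> b) \<and> (\<exists>c\<in>dualb (P \<union> Q) MPQ. P \<subseteq> c)"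
proof (intro conjI)
  have "(b1 \<inter> S) \<union> Y0 \<union> (Y1 - Y0) = b1" using b1 base_split Y0_Y1 by blast
  then have "(b1 \<inter> S) \<union> P \<in> MSP" unfolding P_def using MSP_split[of "b1 \<inter> S" "Y1 - Y0"] b1(1) by simp
  then show "\<exists>b\<in>MSP. P \<subseteq> b" by blast
  have "(m0 \<inter> S) \<union> Y0 \<union> {} = m0" using m0 base_split by auto
  then have "m0 \<inter> S \<in> MSP" using MSP_split[of "m0 \<inter> S" "{}"] m0(1) by simp
  then have "(S \<union> P) - (m0 \<inter> S) \<in> dualb (S \<union> P) MSP" unfolding dualb_def by (rule imageI)
  moreover have "P \<subseteq> (S \<union> P) - (m0 \<inter> S)" using P_disjoint by blast
  ultimately show "\<exists>c\<in>dualb (S \<union> P) MSP. P \<subseteq> c" by blast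
  have "Q_equiv Y0 Y0" "Q_equiv Y1 Y1" using Q_equiv_bases[OF m0(1) m0(1)] Q_equiv_bases[OF b1(1) b1(1)] m0(2) b1(2) by simp_all
  moreover have "Y1 - (Y1 - Y0) = Y0" using Y0_Y1 by blast
  ultimately have "P \<union> Y0 \<in> MPQ" "Y1 \<in> MPQ"
    unfolding P_def using MPQ_split[of "Y1 - Y0" Y0] MPQ_split[of "{}" Y1] Y0_Y1 Y1_Q by simp_all
  then have "(P \<union> Q) - Y1 \<in> dualb (P \<union> Q) MPQ" unfolding dualb_def by blast
  moreover have "P \<subseteq> (P \<union> Q) - Y1" using P_disjoint Y1_Q by blast
  ultimately show "\<exists>b\<in>MPQ. P \<subseteq> b" "\<exists>c\<in>dualb (P \<union> Q) MPQ. P \<subseteq> c"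
    using \<open>P \<union> Y0 \<in> MPQ\<close> by blast+
qed

end

section \<open>Linking with copies\<close>

context complete_matroid
begin

lemma linkb_dual_link:
  assumes inj: "inj_on g Q" and fresh: "g ` Q \<inter> (S \<union> Q) = {}"
  shows "linkb (S \<union> g ` Q) (renameb (\<lambda>x. if x \<in> Q then g x else x) M) (Q \<union> g ` Q) (dual_link g) = M"
proof -
  interpret W: window S Q M g "{}" Q
    by unfold_locales (use inj fresh in blast)+
  have "W.rename = (\<lambda>x. if x \<in> Q then g x else x)" by (rule ext) (simp add: W.rename_def)
  moreover have "{b - {} | b. b \<in> M \<and> {} \<subseteq> b \<and> b \<subseteq> S \<union> Q} = M" using base_subset by auto
  ultimately have "W.MSP = renameb (\<lambda>x. if x \<in> Q then g x else x) M"
    unfolding W.MSP_def renameb_def by simp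
  moreover have "W.MPQ = dual_link g"
  proof -
    have "u \<subseteq> Q \<union> g ` Q" if "u \<in> dual_link g" for u using that unfolding dual_link_def by blast
    then show ?thesis unfolding W.MPQ_def by auto
  qed
  moreover have "W.P = g ` Q" unfolding W.P_def by simp
  ultimately show ?thesis using W.linkb_window by (simp add: Un_commute)
qed

context
  fixes fS fQ :: "'a \<Rightarrow> 'a" and S' Q' :: "'a set"
  assumes fS: "inj_on fS S" "fS ` S = S'" and fQ: "inj_on fQ Q" "fQ ` Q = Q'"
    and copies: "S' \<inter> Q' = {}" "(S' \<union> Q') \<inter> (S \<union> Q) = {}"
begin

private lemma renamed_bases:
  "renameb (\<lambda>x. if x \<in> S then fS x else x) M = (\<lambda>m. fS ` (m \<inter> S) \<union> (m \<inter> Q)) ` M"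
  unfolding renameb_def
proof (rule image_cong)
  fix m assume "m \<in> M"
  then have "m \<inter> S \<union> (m - S) = m" "m - S = m \<inter> Q" using base_subset disjoint by blast+
  then show "(\<lambda>x. if x \<in> S then fS x else x) ` m = fS ` (m \<inter> S) \<union> (m \<inter> Q)" by force
qed simp

private lemma renamed_cobases:
  "renameb (\<lambda>x. if x \<in> S then fS x else fQ x) (dualb (S \<union> Q) M) = (\<lambda>m. fS ` (S - m) \<union> fQ ` (Q - m)) ` M"
  unfolding renameb_def dualb_def image_image
proof (rule image_cong)
  fix m
  have "S \<union> Q - m = (S - m) \<union> (Q - m)" "\<forall>x\<in>Q - m. x \<notin> S" using disjoint by blast+
  then show "(\<lambda>x. if x \<in> S then fS x else fQ x) ` (S \<union> Q - m) = fS ` (S - m) \<union> fQ ` (Q - m)" by force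
qed simp

private lemma renamed_complementary_iff:
  assumes "m \<in> M" "m' \<in> M"
  shows "(fS ` (m \<inter> S) \<union> (m \<inter> Q)) \<inter> (fS ` (S - m') \<union> fQ ` (Q - m')) = {}
      \<and> S' \<subseteq> (fS ` (m \<inter> S) \<union> (m \<inter> Q)) \<union> (fS ` (S - m') \<union> fQ ` (Q - m'))
    \<longleftrightarrow> m \<inter> S = m' \<inter> S"
proof -
  have sub: "fS ` (m \<inter> S) \<subseteq> S'" "fS ` (S - m') \<subseteq> S'" "m \<inter> Q \<subseteq> Q" "fQ ` (Q - m') \<subseteq> Q'"
    using fS(2) fQ(2) by blast+
  have "(A \<union> B) \<inter> (C \<union> E) = A \<inter> C \<and> (S' \<subseteq> (A \<union> B) \<union> (C \<union> E) \<longleftrightarrow> S' \<subseteq> A \<union> C)"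
    if "A \<subseteq> S'" "C \<subseteq> S'" "B \<subseteq> Q" "E \<subseteq> Q'" for A B C E
    using that copies by blast
  from this[OF sub(1,2,3,4)]
  have "(fS ` (m \<inter> S) \<union> (m \<inter> Q)) \<inter> (fS ` (S - m') \<union> fQ ` (Q - m')) = fS ` (m \<inter> S) \<inter> fS ` (S - m')"
    and "S' \<subseteq> (fS ` (m \<inter> S) \<union> (m \<inter> Q)) \<union> (fS ` (S - m') \<union> fQ ` (Q - m'))
      \<longleftrightarrow> fS ` S \<subseteq> fS ` (m \<inter> S) \<union> fS ` (S - m')"
    unfolding fS(2) by blast+
  moreover have "fS ` (m \<inter> S) \<inter> fS ` (S - m') = fS ` ((m \<inter> S) \<inter> (S - m'))"
    using inj_on_image_Int[OF fS(1), of "m \<inter> S" "S - m'"] by blast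
  moreover have "fS ` S \<subseteq> fS ` (m \<inter> S) \<union> fS ` (S - m') \<longleftrightarrow> S \<subseteq> (m \<inter> S) \<union> (S - m')"
    unfolding image_Un[symmetric] using fS(1) by (rule inj_on_image_subset_iff) auto
  moreover have "(m \<inter> S) \<inter> (S - m') = {} \<and> S \<subseteq> (m \<inter> S) \<union> (S - m') \<longleftrightarrow> m \<inter> S = m' \<inter> S"
    by blast
  ultimately show ?thesis by (simp only: image_is_empty)
qed

private lemma renamed_bases_matroid: "matroid (Q \<union> S') (renameb (\<lambda>x. if x \<in> S then fS x else x) M)"
proof -
  have "inj_on (\<lambda>x. if x \<in> S then fS x else x) (S \<union> Q)"
    using fS copies by (auto simp: inj_on_def)
  moreover have "(\<lambda>x. if x \<in> S then fS x else x) ` (S \<union> Q) = Q \<union> S'" using fS(2) disjoint by auto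
  ultimately show ?thesis using matroid_image[OF is_matroid] unfolding renameb_def by metis
qed

private lemma card_renamed_cobase:
  assumes "m \<in> M"
  shows "card (fS ` (S - m) \<union> fQ ` (Q - m)) = card (S \<union> Q) - card m"
proof -
  have "card (fS ` (S - m) \<union> fQ ` (Q - m)) = card (S - m) + card (Q - m)"
    using fS fQ copies finite_S finite_Q
    by (subst card_Un_disjoint) (auto simp: card_image inj_on_subset)
  also have "\<dots> = card ((S \<union> Q) - m)"
    using disjoint finite_S finite_Q by (subst card_Un_disjoint[symmetric]) (auto intro: arg_cong[where f = card])
  also have "\<dots> = card (S \<union> Q) - card m"
    using base_subset[OF assms] base_finite[OF assms] by (simp add: card_Diff_subset)
  finally show ?thesis .
qed

private lemma renamed_cobase_complement:
  "(fS ` (m \<inter> S) \<union> (m \<inter> Q)) \<inter> S' = S' - (fS ` (S - m) \<union> fQ ` (Q - m))"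
proof -
  have "S' - (fS ` (S - m) \<union> fQ ` (Q - m)) = fS ` S - fS ` (S - m)" using fS(2) fQ(2) copies by blast
  also have "\<dots> = fS ` (S - (S - m))" using inj_on_image_set_diff[OF fS(1), of S "S - m"] by auto
  also have "S - (S - m) = m \<inter> S" by blast
  finally show ?thesis using fS(2) copies by blast
qed

private lemma renamed_pairs_eq_dual_link:
  "{(a \<inter> Q) \<union> (b \<inter> Q') | a b. a \<in> (\<lambda>m. fS ` (m \<inter> S) \<union> (m \<inter> Q)) ` M
      \<and> b \<in> (\<lambda>m. fS ` (S - m) \<union> fQ ` (Q - m)) ` M \<and> a \<inter> b = {} \<and> S' \<subseteq> a \<union> b} = dual_link fQ"
    (is "?L = _")
proof (rule set_eqI, rule iffI)
  fix u assume "u \<in> ?L"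
  then obtain m m' where m: "m \<in> M" "m' \<in> M"
    and compl: "(fS ` (m \<inter> S) \<union> (m \<inter> Q)) \<inter> (fS ` (S - m') \<union> fQ ` (Q - m')) = {}
      \<and> S' \<subseteq> (fS ` (m \<inter> S) \<union> (m \<inter> Q)) \<union> (fS ` (S - m') \<union> fQ ` (Q - m'))"
    and u: "u = ((fS ` (m \<inter> S) \<union> (m \<inter> Q)) \<inter> Q) \<union> ((fS ` (S - m') \<union> fQ ` (Q - m')) \<inter> Q')"
    by blast
  have "m \<inter> S = m' \<inter> S" using renamed_complementary_iff[OF m] compl by (rule iffD1)
  moreover have "u = (m \<inter> Q) \<union> fQ ` (Q - m')" unfolding u using fS(2) fQ(2) copies by blast
  ultimately show "u \<in> dual_link fQ" by (rule dual_link_memI[OF m])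
next
  fix u assume "u \<in> dual_link fQ"
  then obtain m m' where m: "m \<in> M" "m' \<in> M" "m \<inter> S = m' \<inter> S" "u = (m \<inter> Q) \<union> fQ ` (Q - m')"
    unfolding dual_link_def by blast
  define a where "a = fS ` (m \<inter> S) \<union> (m \<inter> Q)"
  define b where "b = fS ` (S - m') \<union> fQ ` (Q - m')"
  have "u = (a \<inter> Q) \<union> (b \<inter> Q')" unfolding a_def b_def m(4) using fS(2) fQ(2) copies by blast
  moreover have "a \<in> (\<lambda>m. fS ` (m \<inter> S) \<union> (m \<inter> Q)) ` M" "b \<in> (\<lambda>m. fS ` (S - m) \<union> fQ ` (Q - m)) ` M"
    unfolding a_def b_def using m(1,2) by blast+
  moreover have "a \<inter> b = {} \<and> S' \<subseteq> a \<union> b"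
    unfolding a_def b_def using renamed_complementary_iff[OF m(1,2)] m(3) by (rule iffD2)
  ultimately show "u \<in> ?L" by blast
qed

lemma dual_link_eq_linkb:
  "linkb (S' \<union> Q) (renameb (\<lambda>x. if x \<in> S then fS x else x) M)
     (S' \<union> Q') (renameb (\<lambda>x. if x \<in> S then fS x else fQ x) (dualb (S \<union> Q) M)) = dual_link fQ"
proof -
  let ?A = "renameb (\<lambda>x. if x \<in> S then fS x else x) M"
  let ?B = "renameb (\<lambda>x. if x \<in> S then fS x else fQ x) (dualb (S \<union> Q) M)"
  have "linkb (Q \<union> S') ?A (S' \<union> Q') ?B =
    {(a \<inter> Q) \<union> (b \<inter> Q') | a b. a \<in> ?A \<and> b \<in> ?B \<and> a \<inter> b = {} \<and> S' \<subseteq> a \<union> b}"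
  proof (rule linkb_eq_split_middle)
    show "finite S'" "finite Q'" using fS(2) fQ(2) finite_S finite_Q by blast+
    show "Q \<inter> S' = {}" "S' \<inter> Q' = {}" "Q \<inter> Q' = {}" using copies by blast+
    show "matroid (Q \<union> S') ?A" by (fact renamed_bases_matroid)
    show "b \<subseteq> S' \<union> Q'" if "b \<in> ?B" for b using that fS(2) fQ(2) unfolding renamed_cobases by blast
    show "card b = card b'" if b: "b \<in> ?B" "b' \<in> ?B" for b b'
    proof -
      obtain m m' where "m \<in> M" "m' \<in> M" "b = fS ` (S - m) \<union> fQ ` (Q - m)"
        "b' = fS ` (S - m') \<union> fQ ` (Q - m')" using b unfolding renamed_cobases by blast
      then show ?thesis using card_renamed_cobase card_base_eq[of m m'] by simp
    qed
    show "\<exists>a\<in>?A. a \<inter> S' = S' - b" if b: "b \<in> ?B" for b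
    proof -
      obtain m where "m \<in> M" "b = fS ` (S - m) \<union> fQ ` (Q - m)" using b unfolding renamed_cobases by blast
      with renamed_cobase_complement[of m] show ?thesis unfolding renamed_bases by blast
    qed
  qed
  also have "\<dots> = dual_link fQ"
    unfolding renamed_bases renamed_cobases by (rule renamed_pairs_eq_dual_link)
  finally show ?thesis by (simp add: Un_commute)
qed

end

lemma linkb_copies_identity:
  assumes fS: "inj_on fS S" "fS ` S = S'" and fQ: "inj_on fQ Q" "fQ ` Q = Q'"
    and "S' \<inter> Q' = {}" "(S' \<union> Q') \<inter> (S \<union> Q) = {}"
  shows "M = linkb (S \<union> Q') (renameb (\<lambda>x. if x \<in> Q then fQ x else x) M) (Q \<union> Q')
    (linkb (S' \<union> Q) (renameb (\<lambda>x. if x \<in> S then fS x else x) M)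
       (S' \<union> Q') (renameb (\<lambda>x. if x \<in> S then fS x else fQ x) (dualb (S \<union> Q) M)))"
proof -
  have "fQ ` Q \<inter> (S \<union> Q) = {}" using fQ(2) assms(6) by blast
  from linkb_dual_link[OF fQ(1) this] show ?thesis
    unfolding dual_link_eq_linkb[OF fS fQ assms(5,6)] fQ(2) by simp
qed

lemma exists_minimal_middle:
  assumes inj: "inj_on g Q" and fresh: "g ` Q \<inter> (S \<union> Q) = {}"
  shows "\<exists>P MSP MPQ. finite P \<and> P \<inter> (S \<union> Q) = {}
            \<and> matroid (S \<union> P) MSP \<and> matroid (P \<union> Q) MPQ
            \<and> M = linkb (S \<union> P) MSP (P \<union> Q) MPQ
            \<and> card P = rankb (restrb M S) - rankb (contrb M S)
            \<and> (\<exists>b\<in>MSP. P \<subseteq> b) \<and> (\<exists>c\<in>dualb (S \<union> P) MSP. P \<subseteq> c)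
            \<and> (\<exists>b\<in>MPQ. P \<subseteq> b) \<and> (\<exists>c\<in>dualb (P \<union> Q) MPQ. P \<subseteq> c)
            \<and> complete S P MSP \<and> complete P Q MPQ
            \<and> blocks S Q M = blocks S P MSP
            \<and> blocks Q S M = blocks Q P MPQ
            \<and> blocks P S (dualb (S \<union> P) MSP) = blocks P Q MPQ"
proof -
  obtain m0 b1 where m0: "min_Q_base m0" and b1: "max_Q_base b1" and nested: "m0 \<inter> Q \<subseteq> b1 \<inter> Q"
    by (rule exists_nested_extremal_bases)
  have bases: "m0 \<in> M" "b1 \<in> M" using m0 b1 by (simp_all add: min_Q_base_def max_Q_base_def)
  interpret W: window S Q M g "m0 \<inter> Q" "b1 \<inter> Q"
    using inj fresh nested base_in_window[OF m0 b1 nested] by unfold_locales auto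
  have "card (m0 \<inter> S) + card (m0 \<inter> Q) = card (b1 \<inter> S) + card (b1 \<inter> Q)"
    using card_base_split[OF bases(1)] card_base_split[OF bases(2)] card_base_eq[OF bases] by simp
  moreover have "card (m0 \<inter> Q) \<le> card (b1 \<inter> Q)" using nested finite_Q by (simp add: card_mono)
  ultimately have card_P: "card W.P = rankb (restrb M S) - rankb (contrb M S)"
    using W.card_P rank_restr_S[OF m0] rank_contr_S[OF b1] by simp
  show ?thesis
    by (rule exI[of _ W.P], rule exI[of _ W.MSP], rule exI[of _ W.MPQ])
      (use card_P W.finite_P W.P_disjoint W.MSP_matroid W.MPQ_matroid W.linkb_window
         W.P_in_base_and_cobase[OF bases(1) refl bases(2) refl] W.MSP_complete W.MPQ_complete
         W.blocks_S W.blocks_Q W.blocks_P in \<open>simp add: Int_Un_distrib\<close>)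
qed

end

theorem theorem14:
  fixes S Q S' Q' :: "'a set" and M :: "'a set set" and fS fQ :: "'a \<Rightarrow> 'a"
  assumes "finite S" and "finite Q" and "S \<inter> Q = {}"
    and "matroid (S \<union> Q) M"
    and "complete S Q M"
    and "bij_betw fS S S'" and "bij_betw fQ Q Q'"
    and "S' \<inter> Q' = {}" and "(S' \<union> Q') \<inter> (S \<union> Q) = {}"
  shows "M = linkb (S \<union> Q') (renameb (\<lambda>x. if x \<in> Q then fQ x else x) M)
                   (Q \<union> Q')
                   (linkb (S' \<union> Q) (renameb (\<lambda>x. if x \<in> S then fS x else x) M)
                          (S' \<union> Q') (renameb (\<lambda>x. if x \<in> S then fS x else fQ x) (dualb (S \<union> Q) M)))
       \<and> (\<exists>P MSP MPQ. finite P \<and> P \<inter> (S \<union> Q) = {}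
            \<and> matroid (S \<union> P) MSP \<and> matroid (P \<union> Q) MPQ
            \<and> M = linkb (S \<union> P) MSP (P \<union> Q) MPQ
            \<and> card P = rankb (restrb M S) - rankb (contrb M S)
            \<and> (\<exists>b\<in>MSP. P \<subseteq> b) \<and> (\<exists>c\<in>dualb (S \<union> P) MSP. P \<subseteq> c)
            \<and> (\<exists>b\<in>MPQ. P \<subseteq> b) \<and> (\<exists>c\<in>dualb (P \<union> Q) MPQ. P \<subseteq> c)
            \<and> complete S P MSP \<and> complete P Q MPQ
            \<and> blocks S Q M = blocks S P MSP
            \<and> blocks Q S M = blocks Q P MPQ
            \<and> blocks P S (dualb (S \<union> P) MSP) = blocks P Q MPQ)"
proof -
  (* The finiteness hypotheses are implied by the matroid hypothesis. *)
  interpret complete_matroid S Q M using assms(3-5) by unfold_locales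
  have fS: "inj_on fS S" "fS ` S = S'" and fQ: "inj_on fQ Q" "fQ ` Q = Q'"
    using assms(6,7) by (auto simp: bij_betw_def)
  have fresh: "fQ ` Q \<inter> (S \<union> Q) = {}" using fQ(2) assms(9) by blast
  show ?thesis
    by (rule conjI[OF linkb_copies_identity[OF fS fQ assms(8,9)] exists_minimal_middle[OF fQ(1) fresh]])
qed

end
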